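(* Let $S$ be an irreducible constraint over an alphabet $\Sigma$, let $\{\Sigma_0,\Sigma_1\}$ be a partition of $\Sigma$, and let $n_0,n_1,r$ be positive integers. There exists a deterministic $(S,n_0,n_1)$-VLE whose edges all have length at most $r$ if and only if $S$ is presented by an irreducible deterministic VLG $H=(V,E,L)$ whose edges all have length at most $r$ and such that $V$ contains a subset of principal states with respect to $(n_0,n_1)$.
   Context: A constraint over $\Sigma$ is the set of all words generated (by reading edge labels) along finite paths of some finite directed graph with edges labeled by symbols of $\Sigma$; it is irreducible if it can be presented by a deterministic (no two outgoing edges of a state share a label) strongly connected such graph. A variable-length graph (VLG) $H=(V,E,L)$ is a finite directed multigraph whose edges are labeled by nonempty finite words over $\Sigma$; the length of an edge is the length of its label. The constraint $S(H)$ presented by $H$ is the set of all consecutive sub-words of words obtained by concatenating labels along finite paths of $H$. $H$ is deterministic if for each state the labels of its outgoing edges form a prefix-free list (no label is a prefix of any other label in the list); irreducible if strongly connected; lossless if no two distinct paths with the same initial and terminal state generate the same word. A word over $\Sigma$ is even/odd according to the parity of the number of its symbols in $\Sigma_1$. For integers $n,\ell>0$ and a finite-support integer sequence $\mu$, $\mathsf{K}_\ell(\mu,n)=n^\ell-\sum_{i=1}^{\ell}\mu_i n^{\ell-i}$ (with $0^0=1$). For a pair $(\eta,\omega)$ of finite-support nonnegative integer sequences, put $\mathsf{K}^\pm_\ell=\mathsf{K}_\ell(\eta\pm\omega,n_0\pm n_1)$, let $\mathsf{r}$ be the largest index in the union of their supports (take $\mathsf{r}=0$ if both are zero), and $\mathsf{K}^\pm=\mathsf{K}^\pm_{\mathsf{r}}$.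 An $(S,n_0,n_1)$-VLE is a VLG $\mathcal{E}$ such that: (E1) $\mathcal{E}$ is lossless; (E2) $S(\mathcal{E})\subseteq S$; and, for each state $u$, letting $\eta_\ell(u)$ (resp. $\omega_\ell(u)$) be the number of outgoing edges of $u$ of length $\ell$ with even (resp. odd) label and computing the quantities above for $(\eta(u),\omega(u))$: (E3) $\sum_{\ell\ge1}(\eta_\ell(u)+\omega_\ell(u))/(n_0+n_1)^\ell=1$; (E4) $\mathsf{K}^+_\ell(u)\ge|\mathsf{K}^-_\ell(u)|$ for every $\ell\ge1$. A nonempty subset $V'\subseteq V$ of a VLG $H$ is a set of principal states with respect to $(n_0,n_1)$ if, for every $u\in V'$, letting $(\eta(u|V'),\omega(u|V'))$ be the even/odd length distribution of the labels of the outgoing edges of $u$ in the subgraph of $H$ induced by $V'$ (edges with both endpoints in $V'$), and $\mathsf{K}^\pm_\ell(u),\mathsf{K}^\pm(u),\mathsf{r}(u)$ the corresponding quantities, one has $\mathsf{K}^+(u)\le-|\mathsf{K}^-(u)|$ and $\mathsf{K}^+_\ell(u)\ge|\mathsf{K}^-_\ell(u)|$ for $\ell=1,\dots,\mathsf{r}(u)-1$. *)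

theory Defs
  imports Complex_Main "HOL-Library.Sublist"
begin

text \<open>A variable-length graph (VLG) over symbols of type 'a: a set of states (natural numbers)
  and a list of edges (source, label, target).  Edges are identified by their index in the
  list, so parallel edges with equal labels (multigraph) are allowed.\<close>

type_synonym 'a vlg = "nat set \<times> (nat \<times> 'a list \<times> nat) list"

definition states :: "'a vlg \<Rightarrow> nat set" where "states H = fst H"
definition edges :: "'a vlg \<Rightarrow> (nat \<times> 'a list \<times> nat) list" where "edges H = snd H"

definition esrc :: "'a vlg \<Rightarrow> nat \<Rightarrow> nat" where "esrc H i = fst (edges H ! i)"
definition elab :: "'a vlg \<Rightarrow> nat \<Rightarrow> 'a list" where "elab H i = fst (snd (edges H ! i))"
definition etgt :: "'a vlg \<Rightarrow> nat \<Rightarrow> nat" where "etgt H i = snd (snd (edges H ! i))"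

definition eids :: "'a vlg \<Rightarrow> nat set" where "eids H = {..<length (edges H)}"

definition is_vlg :: "'a set \<Rightarrow> 'a vlg \<Rightarrow> bool" where
  "is_vlg \<Sigma> H \<longleftrightarrow> finite (states H) \<and> states H \<noteq> {} \<and>
     (\<forall>i\<in>eids H. esrc H i \<in> states H \<and> etgt H i \<in> states H \<and>
                  elab H i \<noteq> [] \<and> set (elab H i) \<subseteq> \<Sigma>)"

definition is_path :: "'a vlg \<Rightarrow> nat list \<Rightarrow> bool" where
  "is_path H ps \<longleftrightarrow> set ps \<subseteq> eids H \<and>
     (\<forall>j. Suc j < length ps \<longrightarrow> etgt H (ps ! j) = esrc H (ps ! Suc j))"

definition path_from :: "'a vlg \<Rightarrow> nat \<Rightarrow> nat list \<Rightarrow> nat \<Rightarrow> bool" where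
  "path_from H u ps v \<longleftrightarrow> is_path H ps \<and> u \<in> states H \<and> v \<in> states H \<and>
     (if ps = [] then u = v else esrc H (hd ps) = u \<and> etgt H (last ps) = v)"

definition path_word :: "'a vlg \<Rightarrow> nat list \<Rightarrow> 'a list" where
  "path_word H ps = concat (map (elab H) ps)"

definition path_words :: "'a vlg \<Rightarrow> 'a list set" where
  "path_words H = {path_word H ps | ps. is_path H ps}"

definition vlg_constraint :: "'a vlg \<Rightarrow> 'a list set" where
  "vlg_constraint H = {w. \<exists>ps x y. is_path H ps \<and> x @ w @ y = path_word H ps}"

definition deterministic :: "'a vlg \<Rightarrow> bool" where
  "deterministic H \<longleftrightarrow> (\<forall>i\<in>eids H. \<forall>j\<in>eids H.
      i \<noteq> j \<and> esrc H i = esrc H j \<longrightarrow> \<not> prefix (elab H i) (elab H j))"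

definition strongly_connected :: "'a vlg \<Rightarrow> bool" where
  "strongly_connected H \<longleftrightarrow> (\<forall>u\<in>states H. \<forall>v\<in>states H. \<exists>ps. path_from H u ps v)"

definition lossless :: "'a vlg \<Rightarrow> bool" where
  "lossless H \<longleftrightarrow> (\<forall>u v ps qs. path_from H u ps v \<and> path_from H u qs v \<and>
       path_word H ps = path_word H qs \<longrightarrow> ps = qs)"

definition irreducible_constraint :: "'a set \<Rightarrow> 'a list set \<Rightarrow> bool" where
  "irreducible_constraint \<Sigma> S \<longleftrightarrow> (\<exists>G. is_vlg \<Sigma> G \<and> (\<forall>i\<in>eids G. length (elab G i) = 1) \<and>
       deterministic G \<and> strongly_connected G \<and> S = path_words G)"

definition is_partition2 :: "'a set \<Rightarrow> 'a set \<Rightarrow> 'a set \<Rightarrow> bool" where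
  "is_partition2 \<Sigma> \<Sigma>0 \<Sigma>1 \<longleftrightarrow> \<Sigma>0 \<union> \<Sigma>1 = \<Sigma> \<and> \<Sigma>0 \<inter> \<Sigma>1 = {} \<and> \<Sigma>0 \<noteq> {} \<and> \<Sigma>1 \<noteq> {}"

definition even_word :: "'a set \<Rightarrow> 'a list \<Rightarrow> bool" where
  "even_word \<Sigma>1 w \<longleftrightarrow> even (length (filter (\<lambda>c. c \<in> \<Sigma>1) w))"

text \<open>K_l(mu, n) = n^l - sum_{i=1}^{l} mu_i n^(l-i)   (with 0^0 = 1).\<close>
definition Kfun :: "nat \<Rightarrow> (nat \<Rightarrow> int) \<Rightarrow> int \<Rightarrow> int" where
  "Kfun l \<mu> n = n ^ l - (\<Sum>i=1..l. \<mu> i * n ^ (l - i))"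

definition Kplus :: "nat \<Rightarrow> nat \<Rightarrow> (nat \<Rightarrow> nat) \<Rightarrow> (nat \<Rightarrow> nat) \<Rightarrow> nat \<Rightarrow> int" where
  "Kplus n0 n1 \<eta> \<omega> l = Kfun l (\<lambda>i. int (\<eta> i) + int (\<omega> i)) (int n0 + int n1)"

definition Kminus :: "nat \<Rightarrow> nat \<Rightarrow> (nat \<Rightarrow> nat) \<Rightarrow> (nat \<Rightarrow> nat) \<Rightarrow> nat \<Rightarrow> int" where
  "Kminus n0 n1 \<eta> \<omega> l = Kfun l (\<lambda>i. int (\<eta> i) - int (\<omega> i)) (int n0 - int n1)"

definition rmax :: "(nat \<Rightarrow> nat) \<Rightarrow> (nat \<Rightarrow> nat) \<Rightarrow> nat" where
  "rmax \<eta> \<omega> = (let A = {i. \<eta> i \<noteq> 0} \<union> {i. \<omega> i \<noteq> 0} in if A = {} then 0 else Max A)"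

text \<open>Even/odd length distribution of outgoing edges of u whose target lies in T
  (T = all states gives the plain distribution; T = V' gives the induced one).\<close>
definition eta_dist :: "'a set \<Rightarrow> 'a vlg \<Rightarrow> nat set \<Rightarrow> nat \<Rightarrow> nat \<Rightarrow> nat" where
  "eta_dist \<Sigma>1 H T u l = card {i\<in>eids H. esrc H i = u \<and> etgt H i \<in> T \<and>
       length (elab H i) = l \<and> even_word \<Sigma>1 (elab H i)}"

definition omega_dist :: "'a set \<Rightarrow> 'a vlg \<Rightarrow> nat set \<Rightarrow> nat \<Rightarrow> nat \<Rightarrow> nat" where
  "omega_dist \<Sigma>1 H T u l = card {i\<in>eids H. esrc H i = u \<and> etgt H i \<in> T \<and>
       length (elab H i) = l \<and> \<not> even_word \<Sigma>1 (elab H i)}"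

definition is_VLE :: "'a set \<Rightarrow> 'a set \<Rightarrow> 'a list set \<Rightarrow> nat \<Rightarrow> nat \<Rightarrow> 'a vlg \<Rightarrow> bool" where
  "is_VLE \<Sigma> \<Sigma>1 S n0 n1 E \<longleftrightarrow> is_vlg \<Sigma> E \<and> lossless E \<and> vlg_constraint E \<subseteq> S \<and>
     (\<forall>u\<in>states E.
        let \<eta> = eta_dist \<Sigma>1 E (states E) u; \<omega> = omega_dist \<Sigma>1 E (states E) u in
        (\<Sum>l=1..rmax \<eta> \<omega>. real (\<eta> l + \<omega> l) / real (n0 + n1) ^ l) = 1 \<and>
        (\<forall>l\<ge>1. Kplus n0 n1 \<eta> \<omega> l \<ge> \<bar>Kminus n0 n1 \<eta> \<omega> l\<bar>))"

definition principal_states :: "'a set \<Rightarrow> nat \<Rightarrow> nat \<Rightarrow> 'a vlg \<Rightarrow> nat set \<Rightarrow> bool" where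
  "principal_states \<Sigma>1 n0 n1 H V' \<longleftrightarrow> V' \<noteq> {} \<and> V' \<subseteq> states H \<and>
     (\<forall>u\<in>V'.
        let \<eta> = eta_dist \<Sigma>1 H V' u; \<omega> = omega_dist \<Sigma>1 H V' u; r = rmax \<eta> \<omega> in
        Kplus n0 n1 \<eta> \<omega> r \<le> - \<bar>Kminus n0 n1 \<eta> \<omega> r\<bar> \<and>
        (\<forall>l\<in>{1..<r}. Kplus n0 n1 \<eta> \<omega> l \<ge> \<bar>Kminus n0 n1 \<eta> \<omega> l\<bar>))"

definition max_edge_len_le :: "'a vlg \<Rightarrow> nat \<Rightarrow> bool" where
  "max_edge_len_le H r \<longleftrightarrow> (\<forall>i\<in>eids H. length (elab H i) \<le> r)"

end

(*
  Principal states to encoder: at a principal state u with longest length R, put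
  P = K+_(R-1) and M = K-_(R-1); then P >= |M|, and keeping all shorter edges together with
  ((n0+n1) P + (n0-n1) M)/2 even and ((n0+n1) P - (n0-n1) M)/2 odd edges of length R makes
  K+_R = K-_R = 0.  K+_R = 0 is the Kraft equality (E3), and since K+_l and K-_l are multiples
  of K+_R and K-_R for l >= R, condition (E4) follows.  Restricting H to the principal states and to the kept
  edges gives a deterministic, hence lossless, VLE.

  Encoder to principal states: let G present S deterministically with one-symbol labels.  Call a
  pair (x, g) of states of E and G compatible if every word readable from x in E is readable from
  g in G.  Compatible pairs exist and are preserved by moving along an edge of E in both graphs
  simultaneously, so some compatible pair (x0, g0) lies in a terminal class of this product step.
  The graph H consists of that class with the edges of E, a copy of G whose edges into g0 re-enter
  the class at (x0, g0), and, at each class state (x, g), "escape" edges labelled by the shortest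
  words that leave the prefix tree of the labels at x and lead into the copy of G.  H is
  deterministic, strongly connected and presents S, and the class states are principal: their
  length distributions are those of E, where (E3) forces K+_R = 0 and then (E4) forces K-_R = 0.
*)
theory Submission
  imports Defs "HOL-Library.Nat_Bijection"
begin

section \<open>Walks\<close>

type_synonym 'a edge = "nat \<times> 'a list \<times> nat"

abbreviation lab :: "'a edge \<Rightarrow> 'a list" where "lab e \<equiv> fst (snd e)"
abbreviation tgt :: "'a edge \<Rightarrow> nat" where "tgt e \<equiv> snd (snd e)"

definition edge_set :: "'a vlg \<Rightarrow> 'a edge set" where
  "edge_set H = set (edges H)"

fun walk :: "'a edge set \<Rightarrow> nat \<Rightarrow> 'a edge list \<Rightarrow> nat \<Rightarrow> bool" where
  "walk A u [] v \<longleftrightarrow> u = v"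
| "walk A u (e # es) v \<longleftrightarrow> e \<in> A \<and> fst e = u \<and> walk A (tgt e) es v"

definition word :: "'a edge list \<Rightarrow> 'a list" where
  "word es = concat (map lab es)"

lemma word_simps [simp]:
  "word [] = []" "word (e # es) = lab e @ word es" "word (es @ fs) = word es @ word fs"
  by (simp_all add: word_def)

lemma walk_append_iff: "walk A u (es @ fs) w \<longleftrightarrow> (\<exists>v. walk A u es v \<and> walk A v fs w)"
  by (induction es arbitrary: u) auto

lemma walk_snoc: "walk A u es v \<Longrightarrow> e \<in> A \<Longrightarrow> fst e = v \<Longrightarrow> walk A u (es @ [e]) (tgt e)"
  by (auto simp: walk_append_iff)

lemma walk_mono: "walk A u es v \<Longrightarrow> A \<subseteq> B \<Longrightarrow> walk B u es v"
  by (induction es arbitrary: u) auto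

lemma walk_subset: "walk A u es v \<Longrightarrow> set es \<subseteq> A"
  by (induction es arbitrary: u) auto

lemma walk_last_unique: "walk A u es v \<Longrightarrow> walk A u es w \<Longrightarrow> v = w"
  by (induction es arbitrary: u) auto

lemma walk_closed: "walk A u es v \<Longrightarrow> u \<in> X \<Longrightarrow> (\<And>e. e \<in> A \<Longrightarrow> tgt e \<in> X) \<Longrightarrow> v \<in> X"
  by (induction es arbitrary: u) auto

lemma walk_restrict:
  assumes "walk A u es v" "u \<in> X" "\<And>e. e \<in> A \<Longrightarrow> fst e \<in> X \<Longrightarrow> tgt e \<in> X"
  shows "walk {e \<in> A. fst e \<in> X} u es v"
  using assms by (induction es arbitrary: u) auto

lemma is_path_Cons:
  "is_path H (i # ps) \<longleftrightarrow> i \<in> eids H \<and> is_path H ps \<and> (ps \<noteq> [] \<longrightarrow> etgt H i = esrc H (hd ps))"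
  unfolding is_path_def by (cases ps) (auto simp: nth_Cons split: nat.splits)

lemma walk_map_nth_iff:
  assumes "set ps \<subseteq> eids H"
  shows "walk (edge_set H) u (map ((!) (edges H)) ps) v \<longleftrightarrow>
         is_path H ps \<and> (if ps = [] then u = v else esrc H (hd ps) = u \<and> etgt H (last ps) = v)"
  using assms
proof (induction ps arbitrary: u)
  case Nil
  then show ?case by (simp add: is_path_def)
next
  case (Cons i ps)
  then show ?case
    by (cases ps) (auto simp: is_path_Cons edge_set_def eids_def esrc_def etgt_def)
qed

lemma ex_indices_map_nth: "set ys \<subseteq> set xs \<Longrightarrow> \<exists>ps. set ps \<subseteq> {..<length xs} \<and> ys = map ((!) xs) ps"
proof (induction ys)
  case (Cons y ys)
  then obtain i ps where "i < length xs" "y = xs ! i" "set ps \<subseteq> {..<length xs}" "ys = map ((!) xs) ps"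
    by (auto simp: in_set_conv_nth)
  then show ?case by (intro exI[of _ "i # ps"]) auto
qed simp

lemma path_word_map_nth: "path_word H ps = word (map ((!) (edges H)) ps)"
  unfolding path_word_def word_def by (induction ps) (auto simp: elab_def)

lemma is_path_iff_walk:
  "is_path H ps \<longleftrightarrow> set ps \<subseteq> eids H \<and> (\<exists>u v. walk (edge_set H) u (map ((!) (edges H)) ps) v)"
  using walk_map_nth_iff[of ps H] by (cases ps) (auto simp: is_path_def)

lemma walk_edge_set_indices:
  "walk (edge_set H) u es v \<Longrightarrow> \<exists>ps. set ps \<subseteq> eids H \<and> es = map ((!) (edges H)) ps"
  using ex_indices_map_nth[of es "edges H"] walk_subset[of "edge_set H" u es v]
  by (simp add: edge_set_def eids_def)

lemma vlg_constraint_walks: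
  "vlg_constraint H = {w. \<exists>u es v x y. walk (edge_set H) u es v \<and> x @ w @ y = word es}"
  unfolding vlg_constraint_def is_path_iff_walk path_word_map_nth
  by (blast dest: walk_edge_set_indices)

lemma path_words_walks: "path_words H = {word es | es. \<exists>u v. walk (edge_set H) u es v}"
  unfolding path_words_def is_path_iff_walk path_word_map_nth
  by (blast dest: walk_edge_set_indices)

lemma path_from_iff_walk:
  "path_from H u ps v \<longleftrightarrow> u \<in> states H \<and> v \<in> states H \<and> set ps \<subseteq> eids H \<and>
                           walk (edge_set H) u (map ((!) (edges H)) ps) v"
  unfolding path_from_def using walk_map_nth_iff[of ps H u v] by (auto simp: is_path_def)

lemma strongly_connected_walks:
  "strongly_connected H \<longleftrightarrow> (\<forall>u\<in>states H. \<forall>v\<in>states H. \<exists>es. walk (edge_set H) u es v)"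
  unfolding strongly_connected_def path_from_iff_walk by (blast dest: walk_edge_set_indices)

lemma ball_edge_set: "(\<forall>e\<in>edge_set H. P e) \<longleftrightarrow> (\<forall>i\<in>eids H. P (edges H ! i))"
  unfolding edge_set_def eids_def by (auto simp: all_set_conv_all_nth)

lemma is_vlg_edge_set:
  "is_vlg \<Sigma> H \<longleftrightarrow> finite (states H) \<and> states H \<noteq> {} \<and>
     (\<forall>e\<in>edge_set H. fst e \<in> states H \<and> tgt e \<in> states H \<and> lab e \<noteq> [] \<and> set (lab e) \<subseteq> \<Sigma>)"
  unfolding is_vlg_def ball_edge_set by (simp add: esrc_def etgt_def elab_def)

lemma max_edge_len_le_edge_set: "max_edge_len_le H r \<longleftrightarrow> (\<forall>e\<in>edge_set H. length (lab e) \<le> r)"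
  unfolding max_edge_len_le_def ball_edge_set by (simp add: elab_def)

section \<open>Determinism and losslessness\<close>

definition deterministic_edges :: "'a edge set \<Rightarrow> bool" where
  "deterministic_edges A \<longleftrightarrow>
     (\<forall>e1\<in>A. \<forall>e2\<in>A. fst e1 = fst e2 \<longrightarrow> prefix (lab e1) (lab e2) \<longrightarrow> e1 = e2)"

lemma deterministic_edges_subset: "deterministic_edges B \<Longrightarrow> A \<subseteq> B \<Longrightarrow> deterministic_edges A"
  unfolding deterministic_edges_def by blast

lemma deterministic_nth_eq:
  assumes "deterministic H" "i < length (edges H)" "j < length (edges H)"
    "fst (edges H ! i) = fst (edges H ! j)" "prefix (lab (edges H ! i)) (lab (edges H ! j))"
  shows "i = j"
  using assms unfolding deterministic_def eids_def esrc_def elab_def by auto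

lemma deterministic_iff:
  "deterministic H \<longleftrightarrow> distinct (edges H) \<and> deterministic_edges (edge_set H)"
proof
  assume det: "deterministic H"
  have "distinct (edges H)"
    unfolding distinct_conv_nth
  proof (intro allI impI notI)
    fix i j
    assume "i < length (edges H)" "j < length (edges H)" "i \<noteq> j" "edges H ! i = edges H ! j"
    with deterministic_nth_eq[OF det, of i j] show False
      by simp
  qed
  moreover have "deterministic_edges (edge_set H)"
    unfolding deterministic_edges_def edge_set_def
  proof (intro ballI impI)
    fix e1 e2
    assume e12: "e1 \<in> set (edges H)" "e2 \<in> set (edges H)" "fst e1 = fst e2" "prefix (lab e1) (lab e2)"
    then obtain i j where "i < length (edges H)" "j < length (edges H)" "e1 = edges H ! i" "e2 = edges H ! j"
      unfolding in_set_conv_nth by blast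
    with e12 deterministic_nth_eq[OF det, of i j] show "e1 = e2"
      by simp
  qed
  ultimately show "distinct (edges H) \<and> deterministic_edges (edge_set H)" ..
next
  assume "distinct (edges H) \<and> deterministic_edges (edge_set H)"
  then have dist: "distinct (edges H)" and det: "deterministic_edges (edge_set H)"
    by blast+
  show "deterministic H"
    unfolding deterministic_def eids_def esrc_def elab_def
  proof (intro ballI impI notI)
    fix i j
    assume ij: "i \<in> {..<length (edges H)}" "j \<in> {..<length (edges H)}"
      "i \<noteq> j \<and> fst (edges H ! i) = fst (edges H ! j)" "prefix (lab (edges H ! i)) (lab (edges H ! j))"
    then have "edges H ! i = edges H ! j"
      using det unfolding deterministic_edges_def edge_set_def by simp
    with ij dist show False
      by (simp add: nth_eq_iff_index_eq)
  qed
qed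

lemma walk_prefix_if_word_prefix:
  assumes "deterministic_edges A" "\<forall>e\<in>A. lab e \<noteq> []"
    and "walk A u es v" "walk A u fs w" "prefix (word es) (word fs)"
  shows "prefix es fs"
  using assms(3-5)
proof (induction es arbitrary: u fs)
  case (Cons e es)
  then obtain f fs' where fs: "fs = f # fs'"
    using assms(2) by (cases fs) auto
  have "prefix (lab e @ word es) (word fs)"
    using Cons.prems(3) by simp
  then have "prefix (lab e) (word fs)"
    by (rule append_prefixD)
  moreover have "prefix (lab f) (word fs)"
    using fs by simp
  ultimately have "prefix (lab e) (lab f) \<or> prefix (lab f) (lab e)"
    by (rule prefix_same_cases)
  moreover have "e \<in> A" "f \<in> A" "fst e = fst f"
    using Cons.prems(1,2) fs by auto
  ultimately have "e = f"
    using assms(1) unfolding deterministic_edges_def by metis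
  then show ?case
    using Cons.IH[of "tgt e" fs'] Cons.prems fs by auto
qed simp

lemma walk_eq_if_word_eq:
  assumes "deterministic_edges A" "\<forall>e\<in>A. lab e \<noteq> []"
    and "walk A u es v" "walk A u fs w" "word es = word fs"
  shows "es = fs"
  using walk_prefix_if_word_prefix[OF assms(1-4)] walk_prefix_if_word_prefix[OF assms(1,2,4,3)] assms(5)
  by (simp add: prefix_order.antisym)

lemma lossless_if_deterministic:
  assumes "is_vlg \<Sigma> H" "deterministic H"
  shows "lossless H"
  unfolding lossless_def
proof (intro allI impI)
  fix u v ps qs
  assume paths: "path_from H u ps v \<and> path_from H u qs v \<and> path_word H ps = path_word H qs"
  have dist: "distinct (edges H)" and det: "deterministic_edges (edge_set H)"
    using assms(2) deterministic_iff by blast+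
  have "\<forall>e\<in>edge_set H. lab e \<noteq> []"
    using assms(1) is_vlg_edge_set by blast
  with det paths have "map ((!) (edges H)) ps = map ((!) (edges H)) qs"
    by (intro walk_eq_if_word_eq) (auto simp: path_from_iff_walk path_word_map_nth)
  moreover have "inj_on ((!) (edges H)) (set ps \<union> set qs)"
    using paths inj_on_nth[OF dist, of "set ps \<union> set qs"] by (auto simp: path_from_iff_walk eids_def)
  ultimately show "ps = qs"
    using inj_on_map_eq_map by blast
qed

section \<open>Length distributions\<close>

definition out_count :: "'a set \<Rightarrow> 'a edge set \<Rightarrow> nat set \<Rightarrow> nat \<Rightarrow> bool \<Rightarrow> nat \<Rightarrow> nat" where
  "out_count \<Sigma>1 A T u p l =
     card {e \<in> A. fst e = u \<and> tgt e \<in> T \<and> length (lab e) = l \<and> even_word \<Sigma>1 (lab e) = p}"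

lemma card_nth_filter:
  "distinct xs \<Longrightarrow> card {i \<in> {..<length xs}. P (xs ! i)} = card {x \<in> set xs. P x}"
  by (rule bij_betw_same_card[of "(!) xs"])
     (auto simp: bij_betw_def inj_on_def nth_eq_iff_index_eq in_set_conv_nth)

lemma eta_dist_out_count:
  assumes "distinct (edges H)"
  shows "eta_dist \<Sigma>1 H T u = out_count \<Sigma>1 (edge_set H) T u True"
proof
  fix l
  show "eta_dist \<Sigma>1 H T u l = out_count \<Sigma>1 (edge_set H) T u True l"
    using card_nth_filter[OF assms, of "\<lambda>e. fst e = u \<and> tgt e \<in> T \<and> length (lab e) = l \<and> even_word \<Sigma>1 (lab e)"]
    by (simp add: eta_dist_def out_count_def eids_def esrc_def etgt_def elab_def edge_set_def)
qed

lemma omega_dist_out_count: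
  assumes "distinct (edges H)"
  shows "omega_dist \<Sigma>1 H T u = out_count \<Sigma>1 (edge_set H) T u False"
proof
  fix l
  show "omega_dist \<Sigma>1 H T u l = out_count \<Sigma>1 (edge_set H) T u False l"
    using card_nth_filter[OF assms, of "\<lambda>e. fst e = u \<and> tgt e \<in> T \<and> length (lab e) = l \<and> \<not> even_word \<Sigma>1 (lab e)"]
    by (simp add: omega_dist_def out_count_def eids_def esrc_def etgt_def elab_def edge_set_def)
qed

lemma out_count_cong:
  "(\<And>e. fst e = u \<Longrightarrow> tgt e \<in> T \<Longrightarrow> e \<in> A \<longleftrightarrow> e \<in> A') \<Longrightarrow>
   out_count \<Sigma>1 A T u p = out_count \<Sigma>1 A' T u p"
  unfolding out_count_def by (intro ext arg_cong[where f = card]) blast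

lemma out_count_finite_support:
  assumes "finite A"
  shows "finite {l. out_count \<Sigma>1 A T u p l \<noteq> 0}"
proof (rule finite_subset)
  show "{l. out_count \<Sigma>1 A T u p l \<noteq> 0} \<subseteq> (\<lambda>e. length (lab e)) ` A"
  proof
    fix l
    assume "l \<in> {l. out_count \<Sigma>1 A T u p l \<noteq> 0}"
    then have "{e \<in> A. fst e = u \<and> tgt e \<in> T \<and> length (lab e) = l \<and> even_word \<Sigma>1 (lab e) = p} \<noteq> {}"
      unfolding out_count_def mem_Collect_eq by (metis card.empty)
    then show "l \<in> (\<lambda>e. length (lab e)) ` A"
      by force
  qed
qed (use assms in simp)

section \<open>The polynomials K and conditions (E3), (E4)\<close>

lemma Kfun_0 [simp]: "Kfun 0 \<mu> n = 1"
  by (simp add: Kfun_def)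

lemma Kfun_Suc: "Kfun (Suc l) \<mu> n = n * Kfun l \<mu> n - \<mu> (Suc l)"
proof -
  have "(\<Sum>i=1..l. \<mu> i * n ^ (Suc l - i)) = n * (\<Sum>i=1..l. \<mu> i * n ^ (l - i))"
    unfolding sum_distrib_left by (rule sum.cong) (auto simp: Suc_diff_le)
  then show ?thesis
    by (simp add: Kfun_def algebra_simps)
qed

lemma Kfun_cong: "(\<And>i. 1 \<le> i \<Longrightarrow> i \<le> l \<Longrightarrow> \<mu> i = \<mu>' i) \<Longrightarrow> Kfun l \<mu> n = Kfun l \<mu>' n"
  unfolding Kfun_def by (auto intro!: sum.cong)

lemma Kfun_beyond_support:
  assumes "\<And>i. R < i \<Longrightarrow> \<mu> i = 0" "R \<le> l"
  shows "Kfun l \<mu> n = n ^ (l - R) * Kfun R \<mu> n"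
  using assms(2)
proof (induction l rule: dec_induct)
  case (step l)
  then show ?case
    using assms(1)[of "Suc l"] by (simp add: Kfun_Suc Suc_diff_le)
qed simp

lemma Kfun_eq_0_iff:
  assumes "n > 0"
  shows "Kfun R \<mu> n = 0 \<longleftrightarrow> (\<Sum>l=1..R. real_of_int (\<mu> l) / real_of_int n ^ l) = 1"
proof -
  have "real_of_int n ^ R * (\<Sum>l=1..R. real_of_int (\<mu> l) / real_of_int n ^ l) =
        (\<Sum>l=1..R. real_of_int (\<mu> l) * real_of_int n ^ (R - l))"
    unfolding sum_distrib_left by (rule sum.cong) (use assms in \<open>auto simp: power_diff\<close>)
  then have "real_of_int (Kfun R \<mu> n) =
             real_of_int n ^ R * (1 - (\<Sum>l=1..R. real_of_int (\<mu> l) / real_of_int n ^ l))"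
    by (simp add: Kfun_def algebra_simps)
  moreover have "real_of_int n ^ R \<noteq> 0"
    using assms by simp
  ultimately show ?thesis
    by (metis eq_iff_diff_eq_0 mult_eq_0_iff of_int_eq_0_iff)
qed

lemma Kplus_Kminus_Suc:
  "Kplus n0 n1 \<eta> \<omega> (Suc l) = (int n0 + int n1) * Kplus n0 n1 \<eta> \<omega> l - (int (\<eta> (Suc l)) + int (\<omega> (Suc l)))"
  "Kminus n0 n1 \<eta> \<omega> (Suc l) = (int n0 - int n1) * Kminus n0 n1 \<eta> \<omega> l - (int (\<eta> (Suc l)) - int (\<omega> (Suc l)))"
  by (simp_all add: Kplus_def Kminus_def Kfun_Suc)

lemma Kplus_Kminus_even: "even (Kplus n0 n1 \<eta> \<omega> l + Kminus n0 n1 \<eta> \<omega> l)"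
proof (induction l)
  case (Suc l)
  have "Kplus n0 n1 \<eta> \<omega> (Suc l) + Kminus n0 n1 \<eta> \<omega> (Suc l) =
        (int n0 + int n1) * (Kplus n0 n1 \<eta> \<omega> l + Kminus n0 n1 \<eta> \<omega> l)
          - 2 * (int n1 * Kminus n0 n1 \<eta> \<omega> l + int (\<eta> (Suc l)))"
    by (simp add: Kplus_def Kminus_def Kfun_Suc algebra_simps)
  with Suc show ?case
    by simp
qed (simp add: Kplus_def Kminus_def)

lemma Kplus_Kminus_cong:
  assumes "\<And>i. 1 \<le> i \<Longrightarrow> i \<le> l \<Longrightarrow> \<eta> i = \<eta>' i \<and> \<omega> i = \<omega>' i"
  shows "Kplus n0 n1 \<eta> \<omega> l = Kplus n0 n1 \<eta>' \<omega>' l" "Kminus n0 n1 \<eta> \<omega> l = Kminus n0 n1 \<eta>' \<omega>' l"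
  unfolding Kplus_def Kminus_def using assms by (auto intro!: Kfun_cong)

lemma rmax_le:
  assumes "\<And>i. R < i \<Longrightarrow> \<eta> i = 0 \<and> \<omega> i = 0"
  shows "rmax \<eta> \<omega> \<le> R"
proof -
  let ?A = "{i. \<eta> i \<noteq> 0} \<union> {i. \<omega> i \<noteq> 0}"
  have "?A \<subseteq> {..R}"
    using assms by (auto simp: not_less[symmetric])
  moreover from this have "finite ?A"
    using finite_subset by blast
  ultimately show ?thesis
    unfolding rmax_def Let_def by auto
qed

lemma zero_beyond_rmax:
  assumes "finite {i. \<eta> i \<noteq> 0}" "finite {i. \<omega> i \<noteq> 0}" "rmax \<eta> \<omega> < i"
  shows "\<eta> i = 0 \<and> \<omega> i = 0"
proof (rule ccontr)
  let ?A = "{i. \<eta> i \<noteq> 0} \<union> {i. \<omega> i \<noteq> 0}"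
  assume "\<not> (\<eta> i = 0 \<and> \<omega> i = 0)"
  then have "i \<in> ?A"
    by auto
  moreover from this have "i \<le> Max ?A"
    using assms(1,2) by auto
  ultimately show False
    using assms(3) unfolding rmax_def Let_def by (auto split: if_splits)
qed

definition VLE_distribution :: "nat \<Rightarrow> nat \<Rightarrow> (nat \<Rightarrow> nat) \<Rightarrow> (nat \<Rightarrow> nat) \<Rightarrow> bool" where
  "VLE_distribution n0 n1 \<eta> \<omega> \<longleftrightarrow>
     (\<Sum>l=1..rmax \<eta> \<omega>. real (\<eta> l + \<omega> l) / real (n0 + n1) ^ l) = 1 \<and>
     (\<forall>l\<ge>1. Kplus n0 n1 \<eta> \<omega> l \<ge> \<bar>Kminus n0 n1 \<eta> \<omega> l\<bar>)"

definition principal_distribution :: "nat \<Rightarrow> nat \<Rightarrow> (nat \<Rightarrow> nat) \<Rightarrow> (nat \<Rightarrow> nat) \<Rightarrow> bool" where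
  "principal_distribution n0 n1 \<eta> \<omega> \<longleftrightarrow>
     Kplus n0 n1 \<eta> \<omega> (rmax \<eta> \<omega>) \<le> - \<bar>Kminus n0 n1 \<eta> \<omega> (rmax \<eta> \<omega>)\<bar> \<and>
     (\<forall>l\<in>{1..<rmax \<eta> \<omega>}. Kplus n0 n1 \<eta> \<omega> l \<ge> \<bar>Kminus n0 n1 \<eta> \<omega> l\<bar>)"

lemma is_VLE_iff:
  "is_VLE \<Sigma> \<Sigma>1 S n0 n1 E \<longleftrightarrow> is_vlg \<Sigma> E \<and> lossless E \<and> vlg_constraint E \<subseteq> S \<and>
     (\<forall>u\<in>states E. VLE_distribution n0 n1 (eta_dist \<Sigma>1 E (states E) u) (omega_dist \<Sigma>1 E (states E) u))"
  by (simp add: is_VLE_def VLE_distribution_def Let_def)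

lemma principal_states_iff:
  "principal_states \<Sigma>1 n0 n1 H V' \<longleftrightarrow> V' \<noteq> {} \<and> V' \<subseteq> states H \<and>
     (\<forall>u\<in>V'. principal_distribution n0 n1 (eta_dist \<Sigma>1 H V' u) (omega_dist \<Sigma>1 H V' u))"
  by (simp add: principal_states_def principal_distribution_def Let_def)

lemma Kplus_rmax_eq_0_if_VLE_distribution:
  assumes "n0 > 0" "VLE_distribution n0 n1 \<eta> \<omega>"
  shows "Kplus n0 n1 \<eta> \<omega> (rmax \<eta> \<omega>) = 0"
  using assms Kfun_eq_0_iff[of "int n0 + int n1" "rmax \<eta> \<omega>" "\<lambda>i. int (\<eta> i) + int (\<omega> i)"]
  by (simp add: VLE_distribution_def Kplus_def)

lemma principal_if_VLE_distribution:
  assumes "n0 > 0" "VLE_distribution n0 n1 \<eta> \<omega>"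
  shows "principal_distribution n0 n1 \<eta> \<omega>"
proof -
  have "rmax \<eta> \<omega> \<noteq> 0"
    using assms(2) by (intro notI) (simp add: VLE_distribution_def)
  then have "\<bar>Kminus n0 n1 \<eta> \<omega> (rmax \<eta> \<omega>)\<bar> \<le> Kplus n0 n1 \<eta> \<omega> (rmax \<eta> \<omega>)"
    using assms(2) by (simp add: VLE_distribution_def)
  with Kplus_rmax_eq_0_if_VLE_distribution[OF assms] assms(2) show ?thesis
    by (simp add: principal_distribution_def VLE_distribution_def)
qed

lemma sum_upto_rmax:
  assumes vanish: "\<And>i. R < i \<Longrightarrow> \<eta> i = 0 \<and> \<omega> i = 0"
  shows "(\<Sum>l=1..rmax \<eta> \<omega>. real (\<eta> l + \<omega> l) / real n ^ l) =
         (\<Sum>l=1..R. real (\<eta> l + \<omega> l) / real n ^ l)"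
proof (rule sum.mono_neutral_left)
  have "{i. \<eta> i \<noteq> 0} \<subseteq> {..R}" "{i. \<omega> i \<noteq> 0} \<subseteq> {..R}"
    using vanish by (auto simp: not_less[symmetric])
  then have fin: "finite {i. \<eta> i \<noteq> 0}" "finite {i. \<omega> i \<noteq> 0}"
    using finite_subset by blast+
  show "{1..rmax \<eta> \<omega>} \<subseteq> {1..R}"
    using rmax_le[OF vanish] by simp
  show "\<forall>i\<in>{1..R} - {1..rmax \<eta> \<omega>}. real (\<eta> i + \<omega> i) / real n ^ i = 0"
  proof
    fix i
    assume "i \<in> {1..R} - {1..rmax \<eta> \<omega>}"
    then have "rmax \<eta> \<omega> < i"
      by auto
    from zero_beyond_rmax[OF fin this] show "real (\<eta> i + \<omega> i) / real n ^ i = 0"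
      by simp
  qed
qed simp

lemma VLE_distribution_if_K_vanish:
  assumes "n0 > 0" and vanish: "\<And>i. R < i \<Longrightarrow> \<eta> i = 0 \<and> \<omega> i = 0"
    and K_R: "Kplus n0 n1 \<eta> \<omega> R = 0" "Kminus n0 n1 \<eta> \<omega> R = 0"
    and below: "\<forall>l\<in>{1..<R}. Kplus n0 n1 \<eta> \<omega> l \<ge> \<bar>Kminus n0 n1 \<eta> \<omega> l\<bar>"
  shows "VLE_distribution n0 n1 \<eta> \<omega>"
proof -
  have K_beyond: "Kplus n0 n1 \<eta> \<omega> l = 0 \<and> Kminus n0 n1 \<eta> \<omega> l = 0" if "R \<le> l" for l
  proof -
    have "Kplus n0 n1 \<eta> \<omega> l = (int n0 + int n1) ^ (l - R) * Kplus n0 n1 \<eta> \<omega> R"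
      "Kminus n0 n1 \<eta> \<omega> l = (int n0 - int n1) ^ (l - R) * Kminus n0 n1 \<eta> \<omega> R"
      unfolding Kplus_def Kminus_def by (rule Kfun_beyond_support, use vanish that in auto)+
    with K_R show ?thesis
      by simp
  qed
  have "Kplus n0 n1 \<eta> \<omega> l \<ge> \<bar>Kminus n0 n1 \<eta> \<omega> l\<bar>" if "1 \<le> l" for l
    using below that K_beyond[of l] by (cases "l < R") simp_all
  moreover have "(\<Sum>l=1..R. real (\<eta> l + \<omega> l) / real (n0 + n1) ^ l) = 1"
    using K_R(1) assms(1) Kfun_eq_0_iff[of "int n0 + int n1" R "\<lambda>i. int (\<eta> i) + int (\<omega> i)"]
    by (simp add: Kplus_def)
  ultimately show ?thesis
    using sum_upto_rmax[of R \<eta> \<omega> "n0 + n1", OF vanish] by (simp add: VLE_distribution_def)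
qed

section \<open>From principal states to an encoder\<close>

definition truncate :: "nat \<Rightarrow> nat \<Rightarrow> (nat \<Rightarrow> nat) \<Rightarrow> nat \<Rightarrow> nat" where
  "truncate R k \<mu> l = (if l < R then \<mu> l else if l = R then k else 0)"

lemma Kplus_Kminus_truncate_below:
  assumes "l < R"
  shows "Kplus n0 n1 (truncate R a \<eta>) (truncate R b \<omega>) l = Kplus n0 n1 \<eta> \<omega> l"
    "Kminus n0 n1 (truncate R a \<eta>) (truncate R b \<omega>) l = Kminus n0 n1 \<eta> \<omega> l"
proof -
  have "truncate R a \<eta> i = \<eta> i \<and> truncate R b \<omega> i = \<omega> i" if "i \<le> l" for i
    using assms that by (simp add: truncate_def)
  from Kplus_Kminus_cong[OF this]
  show "Kplus n0 n1 (truncate R a \<eta>) (truncate R b \<omega>) l = Kplus n0 n1 \<eta> \<omega> l"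
    "Kminus n0 n1 (truncate R a \<eta>) (truncate R b \<omega>) l = Kminus n0 n1 \<eta> \<omega> l"
    by simp_all
qed

lemma ex_nat_halves:
  fixes N D P M :: int
  assumes "N \<ge> \<bar>D\<bar>" "P \<ge> \<bar>M\<bar>" "even (N * P + D * M)" "even (N * P - D * M)"
  obtains ke ko :: nat where "2 * int ke = N * P + D * M" "2 * int ko = N * P - D * M"
proof
  have "N * P \<ge> \<bar>D\<bar> * \<bar>M\<bar>"
    using assms(1,2) by (intro mult_mono) auto
  then have "N * P + D * M \<ge> 0" "N * P - D * M \<ge> 0"
    by (auto simp: abs_mult[symmetric] abs_le_iff)
  with assms(3,4) show "2 * int (nat ((N * P + D * M) div 2)) = N * P + D * M"
    "2 * int (nat ((N * P - D * M) div 2)) = N * P - D * M"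
    by simp_all
qed

lemma principal_longest_counts:
  assumes "principal_distribution n0 n1 \<eta> \<omega>" "rmax \<eta> \<omega> = Suc R"
  defines "N \<equiv> int n0 + int n1" and "D \<equiv> int n0 - int n1"
    and "P \<equiv> Kplus n0 n1 \<eta> \<omega> R" and "M \<equiv> Kminus n0 n1 \<eta> \<omega> R"
  obtains ke ko where "ke \<le> \<eta> (Suc R)" "ko \<le> \<omega> (Suc R)"
    "2 * int ke = N * P + D * M" "2 * int ko = N * P - D * M"
proof -
  have at_top: "Kplus n0 n1 \<eta> \<omega> (Suc R) \<le> - \<bar>Kminus n0 n1 \<eta> \<omega> (Suc R)\<bar>"
    and below: "\<forall>l\<in>{1..<Suc R}. Kplus n0 n1 \<eta> \<omega> l \<ge> \<bar>Kminus n0 n1 \<eta> \<omega> l\<bar>"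
    using assms(1,2) by (simp_all add: principal_distribution_def)
  have "N \<ge> \<bar>D\<bar>"
    by (simp add: N_def D_def)
  moreover have "P \<ge> \<bar>M\<bar>"
    using below by (cases "R = 0") (auto simp: P_def M_def Kplus_def Kminus_def)
  moreover have "even (N * P + D * M)" "even (N * P - D * M)"
  proof -
    have "even (P + M)"
      unfolding P_def M_def by (rule Kplus_Kminus_even)
    moreover have "N * P + D * M = N * (P + M) - 2 * (int n1 * M)"
      "N * P - D * M = N * (P + M) - 2 * (int n0 * M)"
      by (simp_all add: N_def D_def algebra_simps)
    ultimately show "even (N * P + D * M)" "even (N * P - D * M)"
      by simp_all
  qed
  ultimately obtain ke ko where ke: "2 * int ke = N * P + D * M" and ko: "2 * int ko = N * P - D * M"
    by (rule ex_nat_halves)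
  have "Kplus n0 n1 \<eta> \<omega> (Suc R) = N * P - (int (\<eta> (Suc R)) + int (\<omega> (Suc R)))"
    "Kminus n0 n1 \<eta> \<omega> (Suc R) = D * M - (int (\<eta> (Suc R)) - int (\<omega> (Suc R)))"
    unfolding N_def D_def P_def M_def by (rule Kplus_Kminus_Suc)+
  with at_top ke ko have "ke \<le> \<eta> (Suc R)" "ko \<le> \<omega> (Suc R)"
    by linarith+
  with ke ko show ?thesis
    using that by blast
qed

lemma VLE_distribution_truncate:
  assumes "n0 > 0" "principal_distribution n0 n1 \<eta> \<omega>"
  defines "R \<equiv> rmax \<eta> \<omega>"
  obtains ke ko where "ke \<le> \<eta> R" "ko \<le> \<omega> R"
    "VLE_distribution n0 n1 (truncate R ke \<eta>) (truncate R ko \<omega>)"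
proof -
  have "R \<noteq> 0"
    using assms(2) by (intro notI) (simp add: R_def principal_distribution_def Kplus_def Kminus_def)
  then obtain R' where R: "R = Suc R'"
    using not0_implies_Suc by blast
  with principal_longest_counts[OF assms(2)] obtain ke ko where "ke \<le> \<eta> R" "ko \<le> \<omega> R"
    and ke: "2 * int ke = (int n0 + int n1) * Kplus n0 n1 \<eta> \<omega> R' + (int n0 - int n1) * Kminus n0 n1 \<eta> \<omega> R'"
    and ko: "2 * int ko = (int n0 + int n1) * Kplus n0 n1 \<eta> \<omega> R' - (int n0 - int n1) * Kminus n0 n1 \<eta> \<omega> R'"
    unfolding R_def by metis
  moreover have "VLE_distribution n0 n1 (truncate R ke \<eta>) (truncate R ko \<omega>)"
  proof (rule VLE_distribution_if_K_vanish[OF assms(1)])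
    show "Kplus n0 n1 (truncate R ke \<eta>) (truncate R ko \<omega>) R = 0"
      "Kminus n0 n1 (truncate R ke \<eta>) (truncate R ko \<omega>) R = 0"
      using Kplus_Kminus_Suc[of n0 n1 "truncate R ke \<eta>" "truncate R ko \<omega>" R'] ke ko
        Kplus_Kminus_truncate_below[of R' R]
      by (simp_all add: R truncate_def)
    show "\<forall>l\<in>{1..<R}. Kplus n0 n1 (truncate R ke \<eta>) (truncate R ko \<omega>) l \<ge>
                        \<bar>Kminus n0 n1 (truncate R ke \<eta>) (truncate R ko \<omega>) l\<bar>"
    proof
      fix l
      assume "l \<in> {1..<R}"
      with assms(2) Kplus_Kminus_truncate_below[of l R]
      show "Kplus n0 n1 (truncate R ke \<eta>) (truncate R ko \<omega>) l \<ge>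
            \<bar>Kminus n0 n1 (truncate R ke \<eta>) (truncate R ko \<omega>) l\<bar>"
        by (simp add: principal_distribution_def R_def)
    qed
    show "truncate R ke \<eta> i = 0 \<and> truncate R ko \<omega> i = 0" if "R < i" for i
      using that by (simp add: truncate_def)
  qed
  ultimately show ?thesis
    using that by blast
qed

lemma out_count_prune:
  assumes "finite A"
    and B: "\<And>q. B q \<subseteq> {e \<in> A. fst e = u \<and> tgt e \<in> T \<and> length (lab e) = R \<and> even_word \<Sigma>1 (lab e) = q}"
    and short: "\<And>e. e \<in> A \<Longrightarrow> fst e = u \<Longrightarrow> tgt e \<in> T \<Longrightarrow> length (lab e) \<le> R"
  shows "out_count \<Sigma>1 {e \<in> A. length (lab e) < R \<or> e \<in> B (even_word \<Sigma>1 (lab e))} T u p =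
         truncate R (card (B p)) (out_count \<Sigma>1 A T u p)"
proof
  fix l
  let ?C = "{e \<in> A. length (lab e) < R \<or> e \<in> B (even_word \<Sigma>1 (lab e))}"
  let ?out = "\<lambda>A. {e \<in> A. fst e = u \<and> tgt e \<in> T \<and> length (lab e) = l \<and> even_word \<Sigma>1 (lab e) = p}"
  have "?out ?C = (if l < R then ?out A else if l = R then B p else {})"
  proof (cases rule: linorder_cases[of l R])
    case equal
    then show ?thesis
      using B[of p] by auto
  next
    case greater
    have "?out ?C = {}"
    proof (intro equals0I)
      fix e
      assume "e \<in> ?out ?C"
      with short[of e] greater show False
        by auto
    qed
    with greater show ?thesis
      by simp
  qed auto
  then show "out_count \<Sigma>1 ?C T u p l = truncate R (card (B p)) (out_count \<Sigma>1 A T u p) l"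
    unfolding out_count_def truncate_def by (simp only: if_distrib[of card]) simp
qed

definition subgraph :: "'a vlg \<Rightarrow> nat set \<Rightarrow> 'a edge set \<Rightarrow> 'a vlg" where
  "subgraph H V A = (V, filter (\<lambda>e. e \<in> A) (edges H))"

lemma states_subgraph [simp]: "states (subgraph H V A) = V"
  by (simp add: subgraph_def states_def)

lemma edge_set_subgraph [simp]: "edge_set (subgraph H V A) = edge_set H \<inter> A"
  by (auto simp: subgraph_def edge_set_def edges_def)

lemma subgraph_properties:
  assumes "is_vlg \<Sigma> H" "deterministic H" "V \<noteq> {}" "V \<subseteq> states H"
    and "\<And>e. e \<in> A \<Longrightarrow> fst e \<in> V \<and> tgt e \<in> V"
  shows "is_vlg \<Sigma> (subgraph H V A)" "deterministic (subgraph H V A)"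
    "vlg_constraint (subgraph H V A) \<subseteq> vlg_constraint H"
    "max_edge_len_le H r \<Longrightarrow> max_edge_len_le (subgraph H V A) r"
proof -
  have "finite V"
    using assms(1,4) finite_subset unfolding is_vlg_def by blast
  with assms show "is_vlg \<Sigma> (subgraph H V A)"
    unfolding is_vlg_edge_set by auto
  have "distinct (edges (subgraph H V A))"
    using assms(2) by (simp add: deterministic_iff subgraph_def edges_def)
  with assms(2) show "deterministic (subgraph H V A)"
    unfolding deterministic_iff by (auto intro: deterministic_edges_subset)
  show "vlg_constraint (subgraph H V A) \<subseteq> vlg_constraint H"
    unfolding vlg_constraint_walks by (auto intro: walk_mono)
  show "max_edge_len_le (subgraph H V A) r" if "max_edge_len_le H r"
    using that by (simp add: max_edge_len_le_edge_set)
qed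

lemma out_edge_length_le_rmax:
  assumes "finite A" "e \<in> A" "fst e = u" "tgt e \<in> T"
  shows "length (lab e) \<le> rmax (out_count \<Sigma>1 A T u True) (out_count \<Sigma>1 A T u False)"
proof (rule ccontr)
  let ?S = "{e' \<in> A. fst e' = u \<and> tgt e' \<in> T \<and> length (lab e') = length (lab e) \<and>
                    even_word \<Sigma>1 (lab e') = even_word \<Sigma>1 (lab e)}"
  assume "\<not> ?thesis"
  then have "out_count \<Sigma>1 A T u True (length (lab e)) = 0 \<and> out_count \<Sigma>1 A T u False (length (lab e)) = 0"
    by (intro zero_beyond_rmax out_count_finite_support[OF assms(1)]) simp
  then have "card ?S = 0"
    by (cases "even_word \<Sigma>1 (lab e)") (simp_all add: out_count_def)
  moreover have "?S \<noteq> {}"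
    using assms(2-4) by blast
  moreover have "finite ?S"
    using assms(1) by simp
  ultimately show False
    by simp
qed

lemma ex_out_edges_VLE_distribution:
  assumes "n0 > 0" "finite A"
    and "principal_distribution n0 n1 (out_count \<Sigma>1 A T u True) (out_count \<Sigma>1 A T u False)"
  obtains C where "C \<subseteq> {e \<in> A. fst e = u \<and> tgt e \<in> T}"
    "VLE_distribution n0 n1 (out_count \<Sigma>1 C T u True) (out_count \<Sigma>1 C T u False)"
proof -
  define c where "c = out_count \<Sigma>1 A T u"
  define R where "R = rmax (c True) (c False)"
  define top where "top p = {e \<in> A. fst e = u \<and> tgt e \<in> T \<and> length (lab e) = R \<and> even_word \<Sigma>1 (lab e) = p}"
    for p
  obtain ke ko where k: "ke \<le> c True R" "ko \<le> c False R"
    and VLE: "VLE_distribution n0 n1 (truncate R ke (c True)) (truncate R ko (c False))"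
    using VLE_distribution_truncate[OF assms(1,3)] unfolding c_def R_def by blast
  have "card (top True) = c True R" "card (top False) = c False R"
    by (simp_all add: c_def top_def out_count_def)
  with k obtain B1 B0 where B: "B1 \<subseteq> top True" "card B1 = ke" "B0 \<subseteq> top False" "card B0 = ko"
    by (metis obtain_subset_with_card_n)
  define B where "B p = (if p then B1 else B0)" for p
  define C where "C = {e \<in> A. fst e = u \<and> tgt e \<in> T \<and> (length (lab e) < R \<or> e \<in> B (even_word \<Sigma>1 (lab e)))}"
  have "out_count \<Sigma>1 C T u p = truncate R (card (B p)) (c p)" for p
  proof -
    have "out_count \<Sigma>1 C T u p = out_count \<Sigma>1 {e \<in> A. length (lab e) < R \<or> e \<in> B (even_word \<Sigma>1 (lab e))} T u p"
      by (rule out_count_cong) (simp add: C_def)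
    also have "\<dots> = truncate R (card (B p)) (c p)"
      unfolding c_def
    proof (rule out_count_prune[OF assms(2)])
      show "B q \<subseteq> {e \<in> A. fst e = u \<and> tgt e \<in> T \<and> length (lab e) = R \<and> even_word \<Sigma>1 (lab e) = q}" for q
        using B by (cases q) (simp_all add: B_def top_def)
      show "length (lab e) \<le> R" if "e \<in> A" "fst e = u" "tgt e \<in> T" for e
        using out_edge_length_le_rmax[OF assms(2) that] by (simp add: R_def c_def)
    qed
    finally show ?thesis .
  qed
  with VLE B(2,4) have "VLE_distribution n0 n1 (out_count \<Sigma>1 C T u True) (out_count \<Sigma>1 C T u False)"
    by (simp add: B_def)
  moreover have "C \<subseteq> {e \<in> A. fst e = u \<and> tgt e \<in> T}"
    by (auto simp: C_def)
  ultimately show ?thesis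
    using that by blast
qed

lemma out_count_subgraph_UN:
  assumes "\<And>v. v \<in> V \<Longrightarrow> C v \<subseteq> {e \<in> edge_set H. fst e = v \<and> tgt e \<in> T}" "u \<in> V"
  shows "out_count \<Sigma>1 (edge_set (subgraph H W (\<Union>v\<in>V. C v))) T u p = out_count \<Sigma>1 (C u) T u p"
proof (rule out_count_cong)
  fix e :: "'a edge"
  assume "fst e = u"
  with assms show "e \<in> edge_set (subgraph H W (\<Union>v\<in>V. C v)) \<longleftrightarrow> e \<in> C u"
    unfolding edge_set_subgraph by blast
qed

lemma VLE_of_principal_states:
  assumes "n0 > 0" and H: "is_vlg \<Sigma> H" "deterministic H" "max_edge_len_le H r"
    and principal: "principal_states \<Sigma>1 n0 n1 H V'"
  shows "\<exists>E. is_VLE \<Sigma> \<Sigma>1 (vlg_constraint H) n0 n1 E \<and> deterministic E \<and> max_edge_len_le E r"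
proof -
  let ?A = "edge_set H"
  have V': "V' \<noteq> {}" "V' \<subseteq> states H"
    and principal_at: "\<And>u. u \<in> V' \<Longrightarrow>
      principal_distribution n0 n1 (out_count \<Sigma>1 ?A V' u True) (out_count \<Sigma>1 ?A V' u False)"
    using principal H(2)
    by (simp_all add: principal_states_iff deterministic_iff eta_dist_out_count omega_dist_out_count)
  define good where "good u C \<longleftrightarrow> C \<subseteq> {e \<in> ?A. fst e = u \<and> tgt e \<in> V'} \<and>
      VLE_distribution n0 n1 (out_count \<Sigma>1 C V' u True) (out_count \<Sigma>1 C V' u False)" for u C
  define C where "C u = (SOME C. good u C)" for u
  have C: "good u (C u)" if "u \<in> V'" for u
  proof -
    have "finite ?A"
      by (simp add: edge_set_def)
    from ex_out_edges_VLE_distribution[OF assms(1) this principal_at[OF that]]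
    have "\<exists>C. good u C"
      unfolding good_def by blast
    then show ?thesis
      unfolding C_def by (rule someI_ex)
  qed
  have C_sub: "C u \<subseteq> {e \<in> ?A. fst e = u \<and> tgt e \<in> V'}" if "u \<in> V'" for u
    using C[OF that] by (simp add: good_def)
  define kept where "kept = (\<Union>u\<in>V'. C u)"
  define E where "E = subgraph H V' kept"
  have "fst e \<in> V' \<and> tgt e \<in> V'" if "e \<in> kept" for e
  proof -
    from that obtain v where "v \<in> V'" "e \<in> C v"
      unfolding kept_def by blast
    with C_sub[of v] show ?thesis
      by blast
  qed
  from subgraph_properties[OF H(1,2) V' this] H(3)
  have E: "is_vlg \<Sigma> E" "deterministic E" "vlg_constraint E \<subseteq> vlg_constraint H" "max_edge_len_le E r"
    unfolding E_def by simp_all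
  have "VLE_distribution n0 n1 (eta_dist \<Sigma>1 E (states E) u) (omega_dist \<Sigma>1 E (states E) u)"
    if "u \<in> states E" for u
  proof -
    have u: "u \<in> V'"
      using that by (simp add: E_def)
    have "distinct (edges E)"
      using E(2) deterministic_iff by blast
    then have "eta_dist \<Sigma>1 E (states E) u = out_count \<Sigma>1 (edge_set E) V' u True"
      "omega_dist \<Sigma>1 E (states E) u = out_count \<Sigma>1 (edge_set E) V' u False"
      by (simp_all add: eta_dist_out_count omega_dist_out_count E_def)
    moreover have "out_count \<Sigma>1 (edge_set E) V' u p = out_count \<Sigma>1 (C u) V' u p" for p
      unfolding E_def kept_def using C_sub u by (rule out_count_subgraph_UN)
    ultimately show ?thesis
      using C[OF u] by (simp add: good_def)
  qed
  with E lossless_if_deterministic[OF E(1,2)] show ?thesis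
    unfolding is_VLE_iff by blast
qed

section \<open>From an encoder to principal states\<close>

definition vlg_of :: "nat set \<Rightarrow> 'a edge set \<Rightarrow> 'a vlg" where
  "vlg_of V A = (V, SOME xs. set xs = A \<and> distinct xs)"

lemma vlg_of_properties:
  assumes "finite A"
  shows "states (vlg_of V A) = V" "edge_set (vlg_of V A) = A" "distinct (edges (vlg_of V A))"
proof -
  have "set (SOME xs. set xs = A \<and> distinct xs) = A \<and> distinct (SOME xs. set xs = A \<and> distinct xs)"
    using someI_ex[OF finite_distinct_list[OF assms]] .
  then show "states (vlg_of V A) = V" "edge_set (vlg_of V A) = A" "distinct (edges (vlg_of V A))"
    by (simp_all add: vlg_of_def states_def edge_set_def edges_def)
qed

lemma ex_terminal_in_rtrancl:
  assumes "finite (R\<^sup>* `` {x})"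
  obtains q where "(x, q) \<in> R\<^sup>*" "\<And>p. (q, p) \<in> R\<^sup>* \<Longrightarrow> (p, q) \<in> R\<^sup>*"
proof -
  obtain q where q: "(x, q) \<in> R\<^sup>*"
    and least: "\<And>q'. (x, q') \<in> R\<^sup>* \<Longrightarrow> card (R\<^sup>* `` {q}) \<le> card (R\<^sup>* `` {q'})"
    using ex_has_least_nat[of "\<lambda>q. (x, q) \<in> R\<^sup>*" x "\<lambda>q. card (R\<^sup>* `` {q})"] by blast
  have "(p, q) \<in> R\<^sup>*" if p: "(q, p) \<in> R\<^sup>*" for p
  proof -
    have sub: "R\<^sup>* `` {p} \<subseteq> R\<^sup>* `` {q}" "R\<^sup>* `` {q} \<subseteq> R\<^sup>* `` {x}"
      using p q by (auto intro: rtrancl_trans)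
    then have "finite (R\<^sup>* `` {q})"
      using assms finite_subset by blast
    moreover have "card (R\<^sup>* `` {q}) \<le> card (R\<^sup>* `` {p})"
      using least p q by (blast intro: rtrancl_trans)
    moreover from calculation have "card (R\<^sup>* `` {p}) \<le> card (R\<^sup>* `` {q})"
      using sub(1) by (intro card_mono)
    ultimately have "R\<^sup>* `` {p} = R\<^sup>* `` {q}"
      using sub(1) card_subset_eq le_antisym by metis
    then show ?thesis
      by blast
  qed
  with q that show ?thesis
    by blast
qed

text \<open>The escape words are the shortest words that leave the prefix tree of L.  No escape word
  is a prefix of another, and every nonempty word is prefix-comparable with a word of L or starts
  with an escape word; this is what lets the constructed graph read every word of S
  deterministically.\<close>

definition escape :: "'a list set \<Rightarrow> 'a list \<Rightarrow> bool" where
  "escape L w \<longleftrightarrow> w \<noteq> [] \<and> (\<forall>v\<in>L. \<not> prefix w v \<and> \<not> prefix v w) \<and>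
     (butlast w = [] \<or> (\<exists>v\<in>L. prefix (butlast w) v))"

lemma escape_length:
  assumes "escape L w" "0 < r" "\<forall>v\<in>L. length v \<le> r"
  shows "length w \<le> r"
proof (cases "butlast w = []")
  case True
  with assms(1,2) show ?thesis
    by (cases w rule: rev_cases) (auto simp: escape_def)
next
  case False
  then obtain v where v: "v \<in> L" "prefix (butlast w) v" "\<not> prefix v w"
    using assms(1) by (auto simp: escape_def)
  have "butlast w \<noteq> v"
    using v(3) prefixeq_butlast by metis
  with v(2) have "length (butlast w) < length v"
    by (intro prefix_length_less) simp
  with v(1) assms(3) show ?thesis
    by fastforce
qed

lemma escape_prefix_eq:
  assumes "escape L w" "escape L w'" "prefix w w'"
  shows "w = w'"
proof (rule ccontr)
  assume "w \<noteq> w'"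
  with assms(3) obtain z zs where "w' = w @ z # zs"
    by (metis prefix_def append_Nil2 neq_Nil_conv)
  then have "prefix w (butlast w')"
    by (simp add: butlast_append)
  moreover have "w \<noteq> []"
    using assms(1) by (simp add: escape_def)
  ultimately obtain v where "v \<in> L" "prefix w v"
    using assms(2) unfolding escape_def by (auto intro: prefix_order.trans)
  with assms(1) show False
    by (simp add: escape_def)
qed

lemma ex_escape_prefix:
  assumes "w \<noteq> []" "\<forall>v\<in>L. \<not> prefix w v \<and> \<not> prefix v w"
  shows "\<exists>w1 w2. w = w1 @ w2 \<and> escape L w1"
  using assms
proof (induction w rule: rev_induct)
  case (snoc a ws)
  show ?case
  proof (cases "ws = [] \<or> (\<exists>v\<in>L. prefix ws v)")
    case True
    with snoc.prems(2) have "escape L (ws @ [a])"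
      by (simp add: escape_def)
    then show ?thesis
      by (intro exI[of _ "ws @ [a]"] exI[of _ "[]"]) simp
  next
    case False
    moreover have "\<forall>v\<in>L. \<not> prefix v ws"
      using snoc.prems(2) by (meson prefix_order.trans prefixI)
    ultimately obtain w1 w2 where "ws = w1 @ w2" "escape L w1"
      using snoc.IH by blast
    then show ?thesis
      by (intro exI[of _ w1] exI[of _ "w2 @ [a]"]) simp
  qed
qed simp

locale VLE_and_presentation =
  fixes \<Sigma> \<Sigma>1 :: "'a set" and S :: "'a list set" and n0 n1 r :: nat and E G :: "'a vlg"
  assumes finite_alphabet: "finite \<Sigma>" and r_pos: "r > 0" and n0_pos: "n0 > 0"
    and VLE: "is_VLE \<Sigma> \<Sigma>1 S n0 n1 E" and det_E: "deterministic E" and max_len_E: "max_edge_len_le E r"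
    and G: "is_vlg \<Sigma> G" and G_single: "\<forall>i\<in>eids G. length (elab G i) = 1"
    and det_G: "deterministic G" and sc_G: "strongly_connected G" and S_G: "S = path_words G"
begin

abbreviation "AE \<equiv> edge_set E"
abbreviation "AG \<equiv> edge_set G"

lemma E_is_vlg: "is_vlg \<Sigma> E"
  using VLE by (simp add: is_VLE_def)

lemma E_edge: "e \<in> AE \<Longrightarrow> fst e \<in> states E \<and> tgt e \<in> states E \<and> lab e \<noteq> [] \<and> set (lab e) \<subseteq> \<Sigma>"
  using E_is_vlg by (simp add: is_vlg_edge_set)

lemma G_edge: "e \<in> AG \<Longrightarrow> fst e \<in> states G \<and> tgt e \<in> states G \<and> lab e \<noteq> [] \<and> set (lab e) \<subseteq> \<Sigma>"
  using G by (simp add: is_vlg_edge_set)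

lemma G_edge_length: "e \<in> AG \<Longrightarrow> length (lab e) = 1"
  using G_single ball_edge_set[of G "\<lambda>e. length (lab e) = 1"] by (simp add: elab_def)

lemma length_word_G: "walk AG g es g' \<Longrightarrow> length (word es) = length es"
  by (induction es arbitrary: g) (auto simp: G_edge_length)

lemma E_edge_length: "e \<in> AE \<Longrightarrow> length (lab e) \<le> r"
  using max_len_E by (simp add: max_edge_len_le_edge_set)

lemma finite_states: "finite (states E)" "finite (states G)" "states G \<noteq> {}"
  using E_is_vlg G by (simp_all add: is_vlg_def)

lemma det_AE: "deterministic_edges AE" and det_AG: "deterministic_edges AG"
  using det_E det_G by (simp_all add: deterministic_iff)

definition run :: "nat \<Rightarrow> 'a list \<Rightarrow> nat \<Rightarrow> bool" where
  "run g w g' \<longleftrightarrow> (\<exists>es. walk AG g es g' \<and> word es = w)"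

lemma run_unique: "run g w g1 \<Longrightarrow> run g w g2 \<Longrightarrow> g1 = g2"
  unfolding run_def using walk_eq_if_word_eq[OF det_AG] G_edge walk_last_unique by metis

lemma run_Nil [simp]: "run g [] g' \<longleftrightarrow> g = g'"
proof
  assume "run g [] g'"
  then obtain es where "walk AG g es g'" "word es = []"
    unfolding run_def by blast
  then show "g = g'"
    using G_edge by (cases es) auto
qed (auto simp: run_def intro: exI[of _ "[]"])

lemma word_take_G: "walk AG g es g' \<Longrightarrow> word (take k es) = take k (word es)"
proof (induction es arbitrary: g k)
  case (Cons e es)
  then obtain a where "lab e = [a]"
    using G_edge_length[of e] by (cases "lab e") auto
  with Cons show ?case
    by (cases k) auto
qed simp

lemma run_append_iff: "run g (x @ y) g2 \<longleftrightarrow> (\<exists>g1. run g x g1 \<and> run g1 y g2)"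
proof
  assume "run g (x @ y) g2"
  then obtain es where es: "walk AG g es g2" "word es = x @ y"
    unfolding run_def by blast
  let ?k = "length x"
  obtain g1 where "walk AG g (take ?k es) g1" "walk AG g1 (drop ?k es) g2"
    using es(1) walk_append_iff[of AG g "take ?k es" "drop ?k es"] by auto
  moreover have "word (take ?k es) = x"
    using word_take_G[OF es(1)] es(2) by simp
  moreover from this have "word (drop ?k es) = y"
    using es(2) word_simps(3)[of "take ?k es" "drop ?k es"] by simp
  ultimately show "\<exists>g1. run g x g1 \<and> run g1 y g2"
    unfolding run_def by blast
next
  assume "\<exists>g1. run g x g1 \<and> run g1 y g2"
  then show "run g (x @ y) g2"
    unfolding run_def by (metis walk_append_iff word_simps(3))
qed

lemma run_state: "run g w g' \<Longrightarrow> g \<in> states G \<Longrightarrow> g' \<in> states G"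
  unfolding run_def using G_edge by (blast intro: walk_closed)

lemma run_alphabet: "run g w g' \<Longrightarrow> set w \<subseteq> \<Sigma>"
proof -
  assume "run g w g'"
  then obtain es where "walk AG g es g'" "word es = w"
    unfolding run_def by blast
  then show ?thesis
    using G_edge by (induction es arbitrary: g w) fastforce+
qed

lemma run_edge: "e \<in> AG \<Longrightarrow> run (fst e) (lab e) (tgt e)"
  unfolding run_def by (intro exI[of _ "[e]"]) simp

lemma run_single: "run g [a] g' \<Longrightarrow> \<exists>e\<in>AG. fst e = g \<and> lab e = [a] \<and> tgt e = g'"
proof -
  assume "run g [a] g'"
  then obtain es where es: "walk AG g es g'" "word es = [a]"
    unfolding run_def by blast
  then have "length es = 1"
    using length_word_G by fastforce
  then obtain e where "es = [e]"
    by (cases es) auto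
  with es show ?thesis
    by auto
qed

lemma run_in_S: "run g w g' \<Longrightarrow> w \<in> S"
  unfolding run_def S_G path_words_walks by blast

definition followers_E :: "nat \<Rightarrow> 'a list set" where
  "followers_E x = {word es | es. \<exists>v. walk AE x es v}"

definition followers_G :: "nat \<Rightarrow> 'a list set" where
  "followers_G g = {w. \<exists>g'. run g w g'}"

lemma S_eq_followers_G: "S = (\<Union>g\<in>states G. followers_G g)"
proof (intro set_eqI iffI)
  fix w
  assume "w \<in> S"
  then obtain es u v where es: "w = word es" "walk AG u es v"
    unfolding S_G path_words_walks by blast
  show "w \<in> (\<Union>g\<in>states G. followers_G g)"
  proof (cases es)
    case Nil
    then show ?thesis
      using es finite_states(3) by (auto simp: followers_G_def)
  next
    case (Cons e es')
    then have "u \<in> states G"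
      using es G_edge[of e] by auto
    with es show ?thesis
      unfolding followers_G_def run_def by blast
  qed
qed (auto simp: followers_G_def run_in_S)

lemma followers_E_subset_S: "followers_E x \<subseteq> S"
proof
  fix w
  assume "w \<in> followers_E x"
  then obtain es v where "walk AE x es v" "w = word es"
    unfolding followers_E_def by blast
  then have "w \<in> vlg_constraint E"
    unfolding vlg_constraint_walks by (intro CollectI exI[of _ x] exI[of _ es] exI[of _ v] exI[of _ "[]"]) simp
  then show "w \<in> S"
    using VLE by (auto simp: is_VLE_def)
qed

lemma followers_E_append:
  assumes "walk AE x es x'" "w \<in> followers_E x'"
  shows "word es @ w \<in> followers_E x"
proof -
  obtain fs v where "walk AE x' fs v" "w = word fs"
    using assms(2) unfolding followers_E_def by blast
  with assms(1) have "walk AE x (es @ fs) v" "word es @ w = word (es @ fs)"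
    by (auto simp: walk_append_iff)
  then show ?thesis
    unfolding followers_E_def by blast
qed

lemma followers_E_edge: "e \<in> AE \<Longrightarrow> lab e \<in> followers_E (fst e)"
  unfolding followers_E_def by (intro CollectI exI[of _ "[e]"] conjI exI[of _ "tgt e"]) simp_all

lemma followers_G_prefix: "x @ y \<in> followers_G g \<Longrightarrow> x \<in> followers_G g"
  unfolding followers_G_def using run_append_iff by blast

lemma followers_G_after: "run g x g1 \<Longrightarrow> x @ y \<in> followers_G g \<Longrightarrow> y \<in> followers_G g1"
  unfolding followers_G_def using run_append_iff run_unique by blast

definition compatible :: "nat \<Rightarrow> nat \<Rightarrow> bool" where
  "compatible x g \<longleftrightarrow> x \<in> states E \<and> g \<in> states G \<and> followers_E x \<subseteq> followers_G g"

lemma compatible_after_unique_cover: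
  assumes "x \<in> states E" "T \<subseteq> states G" "\<forall>w\<in>followers_E x. \<exists>t\<in>T. w \<in> followers_G t"
    and "t \<in> T" "run t w t1" "walk AE x es x1" "word es = w"
    and unique: "\<forall>t'\<in>T - {t}. w \<notin> followers_G t'"
  shows "compatible x1 t1"
  unfolding compatible_def
proof (intro conjI subsetI)
  show "x1 \<in> states E"
    using walk_closed[OF assms(6,1)] E_edge by blast
  show "t1 \<in> states G"
    using run_state[OF assms(5)] assms(2,4) by blast
  fix w'
  assume "w' \<in> followers_E x1"
  then have "w @ w' \<in> followers_E x"
    using followers_E_append assms(6,7) by blast
  then obtain t' where t': "t' \<in> T" "w @ w' \<in> followers_G t'"
    using assms(3) by blast
  then have "t' = t"
    using unique followers_G_prefix by blast
  with t' assms(5) show "w' \<in> followers_G t1"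
    using followers_G_after by blast
qed

lemma ex_compatible_if_covered:
  assumes "x \<in> states E" "T \<subseteq> states G" "\<forall>w\<in>followers_E x. \<exists>t\<in>T. w \<in> followers_G t"
  shows "\<exists>x' g. compatible x' g"
  using assms
proof (induction "card T" arbitrary: T rule: less_induct)
  case less
  have "[] \<in> followers_E x"
    unfolding followers_E_def by (intro CollectI exI[of _ "[]"] conjI exI[of _ x]) simp_all
  then obtain t where t: "t \<in> T"
    using less.prems(3) by blast
  show ?case
  proof (cases "\<forall>w\<in>followers_E x. \<exists>t'\<in>T - {t}. w \<in> followers_G t'")
    case True
    moreover have "card (T - {t}) < card T"
      using t less.prems(2) finite_states(2) by (meson card_Diff1_less finite_subset)
    ultimately show ?thesis
      using less.hyps less.prems(1,2) by blast
  next
    case False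
    then obtain w where w: "w \<in> followers_E x" "\<forall>t'\<in>T - {t}. w \<notin> followers_G t'"
      by blast
    then have "w \<in> followers_G t"
      using less.prems(3) by blast
    then obtain t1 where "run t w t1"
      unfolding followers_G_def by blast
    moreover obtain es x1 where "walk AE x es x1" "word es = w"
      using w(1) unfolding followers_E_def by blast
    ultimately show ?thesis
      using compatible_after_unique_cover[OF less.prems t] w(2) by blast
  qed
qed

lemma ex_compatible: "\<exists>x g. compatible x g"
proof -
  have "states E \<noteq> {}"
    using E_is_vlg by (simp add: is_vlg_def)
  then obtain x where "x \<in> states E"
    by blast
  moreover have "\<forall>w\<in>followers_E x. \<exists>t\<in>states G. w \<in> followers_G t"
    using followers_E_subset_S S_eq_followers_G by blast
  ultimately show ?thesis
    using ex_compatible_if_covered by blast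
qed

definition product_step :: "((nat \<times> nat) \<times> (nat \<times> nat)) set" where
  "product_step = {((x, g), (x', g')). \<exists>e\<in>AE. fst e = x \<and> tgt e = x' \<and> run g (lab e) g'}"

lemma compatible_step:
  assumes "compatible x g" "((x, g), (x', g')) \<in> product_step"
  shows "compatible x' g'"
proof -
  obtain e where e: "e \<in> AE" "fst e = x" "tgt e = x'" "run g (lab e) g'"
    using assms(2) unfolding product_step_def by blast
  show ?thesis
    unfolding compatible_def
  proof (intro conjI subsetI)
    show "x' \<in> states E"
      using e E_edge by blast
    show "g' \<in> states G"
      using run_state[OF e(4)] assms(1) by (simp add: compatible_def)
    fix w
    assume "w \<in> followers_E x'"
    then have "lab e @ w \<in> followers_E x"
      using followers_E_append[of x "[e]" x' w] e by simp
    then have "lab e @ w \<in> followers_G g"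
      using assms(1) by (auto simp: compatible_def)
    with e(4) show "w \<in> followers_G g'"
      by (rule followers_G_after)
  qed
qed

lemma compatible_rtrancl:
  "((x, g), (x', g')) \<in> product_step\<^sup>* \<Longrightarrow> compatible x g \<Longrightarrow> compatible x' g'"
  by (induction rule: rtrancl_induct2) (auto intro: compatible_step)

lemma finite_reachable:
  assumes "compatible x g"
  shows "finite (product_step\<^sup>* `` {(x, g)})"
proof (rule finite_subset)
  show "product_step\<^sup>* `` {(x, g)} \<subseteq> states E \<times> states G"
    using compatible_rtrancl assms by (fastforce simp: compatible_def)
qed (simp add: finite_states)

lemma E_out_edge:
  assumes "x \<in> states E"
  shows "\<exists>e\<in>AE. fst e = x"
proof (rule ccontr)
  assume "\<not> (\<exists>e\<in>AE. fst e = x)"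
  then have "{e \<in> AE. fst e = x \<and> tgt e \<in> states E \<and> length (lab e) = l \<and> even_word \<Sigma>1 (lab e) = p} = {}"
    for l p
    by blast
  then have "out_count \<Sigma>1 AE (states E) x p = (\<lambda>_. 0)" for p
    unfolding out_count_def by (intro ext) (simp only: card.empty)
  then have "eta_dist \<Sigma>1 E (states E) x = (\<lambda>_. 0)" "omega_dist \<Sigma>1 E (states E) x = (\<lambda>_. 0)"
    using det_E by (simp_all add: deterministic_iff eta_dist_out_count omega_dist_out_count)
  moreover have "VLE_distribution n0 n1 (eta_dist \<Sigma>1 E (states E) x) (omega_dist \<Sigma>1 E (states E) x)"
    using VLE assms by (simp add: is_VLE_iff)
  moreover have "rmax (\<lambda>_::nat. 0::nat) (\<lambda>_. 0) = 0"
    by (simp add: rmax_def)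
  ultimately show False
    by (simp add: VLE_distribution_def)
qed

definition G_next :: "nat \<Rightarrow> 'a list \<Rightarrow> nat" where
  "G_next g w = (THE g'. run g w g')"

lemma G_next: "run g w g' \<Longrightarrow> G_next g w = g'"
  unfolding G_next_def using run_unique by blast

lemma ex_terminal_compatible:
  obtains x0 g0 where "compatible x0 g0"
    "\<And>p. ((x0, g0), p) \<in> product_step\<^sup>* \<Longrightarrow> (p, (x0, g0)) \<in> product_step\<^sup>*"
proof -
  obtain x g where "compatible x g"
    using ex_compatible by blast
  then obtain q where "((x, g), q) \<in> product_step\<^sup>*" "\<And>p. (q, p) \<in> product_step\<^sup>* \<Longrightarrow> (p, q) \<in> product_step\<^sup>*"
    using finite_reachable ex_terminal_in_rtrancl by metis
  moreover obtain x0 g0 where "q = (x0, g0)"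
    by fastforce
  ultimately show ?thesis
    using that compatible_rtrancl \<open>compatible x g\<close> by blast
qed

end

locale VLE_core = VLE_and_presentation +
  fixes x0 g0 :: nat
  assumes compatible_0: "compatible x0 g0"
    and terminal_0: "\<And>p. ((x0, g0), p) \<in> product_step\<^sup>* \<Longrightarrow> (p, (x0, g0)) \<in> product_step\<^sup>*"
begin

definition core :: "(nat \<times> nat) set" where
  "core = product_step\<^sup>* `` {(x0, g0)}"

lemma core_0: "(x0, g0) \<in> core"
  by (simp add: core_def)

lemma compatible_core: "(x, g) \<in> core \<Longrightarrow> compatible x g"
  unfolding core_def using compatible_rtrancl compatible_0 by blast

lemma core_closed: "p \<in> core \<Longrightarrow> (p, p') \<in> product_step\<^sup>* \<Longrightarrow> p' \<in> core"
  unfolding core_def by (auto intro: rtrancl_trans)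

lemma core_returns: "p \<in> core \<Longrightarrow> (p, (x0, g0)) \<in> product_step\<^sup>*"
  unfolding core_def using terminal_0 by blast

lemma finite_core: "finite core"
  unfolding core_def using finite_reachable[OF compatible_0] .

lemma run_from_core: "(x, g) \<in> core \<Longrightarrow> e \<in> AE \<Longrightarrow> fst e = x \<Longrightarrow> \<exists>g'. run g (lab e) g'"
  using compatible_core followers_E_edge unfolding compatible_def followers_G_def by blast

lemma core_step:
  "(x, g) \<in> core \<Longrightarrow> e \<in> AE \<Longrightarrow> fst e = x \<Longrightarrow> run g (lab e) g' \<Longrightarrow> (tgt e, g') \<in> core"
  using core_closed[of "(x, g)" "(tgt e, g')"] unfolding product_step_def by blast

text \<open>States of the constructed graph are natural numbers: even numbers code the pairs of the
  core, odd numbers the states of a copy of G.  An edge of the copy that would enter g0 is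
  redirected to the core pair (x0, g0), which is what makes the graph strongly connected.\<close>

definition core_state :: "nat \<times> nat \<Rightarrow> nat" where
  "core_state p = 2 * prod_encode p"

definition copy_state :: "nat \<Rightarrow> nat" where
  "copy_state g = 2 * g + 1"

definition G_part :: "nat \<Rightarrow> nat" where
  "G_part s = (if even s then snd (prod_decode (s div 2)) else s div 2)"

definition copy_target :: "nat \<Rightarrow> nat" where
  "copy_target g = (if g = g0 then core_state (x0, g0) else copy_state g)"

lemma core_state_eq_iff [simp]: "core_state p = core_state p' \<longleftrightarrow> p = p'"
  by (simp add: core_state_def)

lemma copy_state_eq_iff [simp]: "copy_state g = copy_state g' \<longleftrightarrow> g = g'"
  by (simp add: copy_state_def)

lemma core_state_neq_copy_state [simp]: "core_state p \<noteq> copy_state g" "copy_state g \<noteq> core_state p"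
  unfolding core_state_def copy_state_def by presburger+

lemma G_part_simps [simp]:
  "G_part (core_state p) = snd p" "G_part (copy_state g) = g" "G_part (copy_target g) = g"
  by (simp_all add: G_part_def core_state_def copy_state_def copy_target_def)

definition out_labels :: "nat \<Rightarrow> 'a list set" where
  "out_labels x = {lab e | e. e \<in> AE \<and> fst e = x}"

lemma out_labels_edge: "e \<in> AE \<Longrightarrow> lab e \<in> out_labels (fst e)"
  unfolding out_labels_def by blast

definition core_edges :: "'a edge set" where
  "core_edges = {(core_state (x, g), lab e, core_state (tgt e, g')) | x g e g'.
                  (x, g) \<in> core \<and> e \<in> AE \<and> fst e = x \<and> run g (lab e) g'}"

definition escape_edges :: "'a edge set" where
  "escape_edges = {(core_state (x, g), w, copy_state g') | x g w g'.
                    (x, g) \<in> core \<and> escape (out_labels x) w \<and> run g w g'}"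

definition copy_edges :: "'a edge set" where
  "copy_edges = {(copy_state (fst e), lab e, copy_target (tgt e)) | e. e \<in> AG}"

definition full_edges :: "'a edge set" where
  "full_edges = core_edges \<union> escape_edges \<union> copy_edges"

definition full_states :: "nat set" where
  "full_states = core_state ` core \<union> copy_state ` states G"

lemma full_edges_cases:
  assumes "t \<in> full_edges"
  obtains (core) x g e g' where "t = (core_state (x, g), lab e, core_state (tgt e, g'))"
      "(x, g) \<in> core" "e \<in> AE" "fst e = x" "run g (lab e) g'"
  | (escape) x g w g' where "t = (core_state (x, g), w, copy_state g')"
      "(x, g) \<in> core" "escape (out_labels x) w" "run g w g'"
  | (copy) e where "t = (copy_state (fst e), lab e, copy_target (tgt e))" "e \<in> AG"
  using assms unfolding full_edges_def core_edges_def escape_edges_def copy_edges_def by blast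

lemma escape_length_le_r:
  assumes "escape (out_labels x) w"
  shows "length w \<le> r"
proof (rule escape_length[OF assms r_pos])
  show "\<forall>v\<in>out_labels x. length v \<le> r"
    using E_edge_length by (auto simp: out_labels_def)
qed

lemma copy_target_in_full_states: "g \<in> states G \<Longrightarrow> copy_target g \<in> full_states"
  unfolding copy_target_def full_states_def using core_0 by auto

lemma full_edge_properties:
  assumes "t \<in> full_edges"
  shows "fst t \<in> full_states \<and> tgt t \<in> full_states \<and> run (G_part (fst t)) (lab t) (G_part (tgt t)) \<and>
    lab t \<noteq> [] \<and> set (lab t) \<subseteq> \<Sigma> \<and> length (lab t) \<le> r"
  using assms
proof (cases rule: full_edges_cases)
  case (core x g e g')
  moreover from core have "(tgt e, g') \<in> core"
    using core_step by blast
  ultimately show ?thesis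
    using E_edge[of e] E_edge_length[of e] by (simp add: full_states_def)
next
  case (escape x g w g')
  moreover from escape have "g' \<in> states G"
    using run_state compatible_core[of x g] by (simp add: compatible_def)
  ultimately show ?thesis
    using run_alphabet[of g w g'] escape_length_le_r[of x w] by (simp add: full_states_def escape_def)
next
  case (copy e)
  then show ?thesis
    using G_edge[of e] G_edge_length[of e] r_pos copy_target_in_full_states[of "tgt e"] run_edge[of e]
    by (simp add: full_states_def)
qed

lemma finite_full_edges: "finite full_edges"
proof -
  let ?W = "{w. set w \<subseteq> \<Sigma> \<and> length w \<le> r}"
  have "core_edges \<subseteq> (\<lambda>((x, g), e, g'). (core_state (x, g), lab e, core_state (tgt e, g'))) ` (core \<times> AE \<times> states G)"
  proof
    fix t
    assume "t \<in> core_edges"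
    then obtain x g e g' where t: "t = (core_state (x, g), lab e, core_state (tgt e, g'))"
      "(x, g) \<in> core" "e \<in> AE" "run g (lab e) g'"
      unfolding core_edges_def by blast
    then have "g' \<in> states G"
      using run_state compatible_core[of x g] by (simp add: compatible_def)
    with t show "t \<in> (\<lambda>((x, g), e, g'). (core_state (x, g), lab e, core_state (tgt e, g'))) ` (core \<times> AE \<times> states G)"
      by (intro image_eqI[of _ _ "((x, g), e, g')"]) auto
  qed
  moreover have "escape_edges \<subseteq> (\<lambda>((x, g), w, g'). (core_state (x, g), w, copy_state g')) ` (core \<times> ?W \<times> states G)"
  proof
    fix t
    assume "t \<in> escape_edges"
    then obtain x g w g' where t: "t = (core_state (x, g), w, copy_state g')"
      "(x, g) \<in> core" "escape (out_labels x) w" "run g w g'"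
      unfolding escape_edges_def by blast
    then have "g' \<in> states G" "set w \<subseteq> \<Sigma>" "length w \<le> r"
      using run_state compatible_core[of x g] run_alphabet escape_length_le_r by (simp_all add: compatible_def)
    with t show "t \<in> (\<lambda>((x, g), w, g'). (core_state (x, g), w, copy_state g')) ` (core \<times> ?W \<times> states G)"
      by (intro image_eqI[of _ _ "((x, g), w, g')"]) auto
  qed
  moreover have "copy_edges = (\<lambda>e. (copy_state (fst e), lab e, copy_target (tgt e))) ` AG"
    unfolding copy_edges_def by blast
  moreover have "finite ?W"
    using finite_lists_length_le[OF finite_alphabet] .
  moreover have "finite AE" "finite AG"
    by (simp_all add: edge_set_def)
  ultimately show ?thesis
    unfolding full_edges_def using finite_core finite_states(2)
    by (metis (no_types, lifting) finite_Un finite_SigmaI finite_imageI finite_subset)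
qed

lemma deterministic_from_core_state:
  assumes "t1 \<in> full_edges" "t2 \<in> full_edges" "fst t1 = core_state (y, h)" "fst t2 = core_state (y, h)"
    and pre: "prefix (lab t1) (lab t2)"
  shows "t1 = t2"
  using assms(1)
proof (cases rule: full_edges_cases)
  case c1: (core x g a g1)
  from assms(2) show ?thesis
  proof (cases rule: full_edges_cases)
    case c2: (core x' g' b g2)
    with c1 assms(3,4) have "x' = x" "g' = g"
      by simp_all
    with c1 c2 pre det_AE have "a = b"
      unfolding deterministic_edges_def by simp
    with c1 c2 \<open>g' = g\<close> have "g1 = g2"
      using run_unique by blast
    with c1 c2 \<open>x' = x\<close> \<open>g' = g\<close> \<open>a = b\<close> show ?thesis
      by simp
  next
    case c2: (escape x' g' w g2)
    with c1 assms(3,4) out_labels_edge[of a] have "lab a \<in> out_labels x'"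
      by simp
    with c1 c2 pre show ?thesis
      by (simp add: escape_def)
  qed (use assms(4) in simp)
next
  case c1: (escape x g w g1)
  from assms(2) show ?thesis
  proof (cases rule: full_edges_cases)
    case c2: (core x' g' b g2)
    with c1 assms(3,4) out_labels_edge[of b] have "lab b \<in> out_labels x"
      by simp
    with c1 c2 pre show ?thesis
      by (simp add: escape_def)
  next
    case c2: (escape x' g' w' g2)
    with c1 assms(3,4) have "x' = x" "g' = g"
      by simp_all
    with c1 c2 pre have "w = w'"
      using escape_prefix_eq by simp
    with c1 c2 \<open>g' = g\<close> have "g1 = g2"
      using run_unique by blast
    with c1 c2 \<open>x' = x\<close> \<open>g' = g\<close> \<open>w = w'\<close> show ?thesis
      by simp
  qed (use assms(4) in simp)
qed (use assms(3) in simp)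

lemma deterministic_from_copy_state:
  assumes "t1 \<in> full_edges" "t2 \<in> full_edges" "fst t1 = copy_state g" "fst t2 = copy_state g"
    and pre: "prefix (lab t1) (lab t2)"
  shows "t1 = t2"
  using assms(1)
proof (cases rule: full_edges_cases)
  case c1: (copy a)
  from assms(2) show ?thesis
  proof (cases rule: full_edges_cases)
    case c2: (copy b)
    with c1 pre G_edge_length[of a] G_edge_length[of b] have "lab a = lab b"
      by (auto simp: prefix_def)
    with c1 c2 assms(3,4) det_AG have "a = b"
      unfolding deterministic_edges_def by simp
    with c1 c2 show ?thesis
      by simp
  qed (use assms(4) in simp_all)
qed (use assms(3) in simp_all)

lemma deterministic_full_edges: "deterministic_edges full_edges"
  unfolding deterministic_edges_def
proof (intro ballI impI)
  fix t1 t2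
  assume t: "t1 \<in> full_edges" "t2 \<in> full_edges" "fst t1 = fst t2" "prefix (lab t1) (lab t2)"
  then have "fst t1 \<in> full_states"
    using full_edge_properties by blast
  then show "t1 = t2"
    unfolding full_states_def
    using deterministic_from_core_state[OF t(1,2) _ _ t(4)] deterministic_from_copy_state[OF t(1,2) _ _ t(4)] t(3)
    by auto
qed

lemma run_along_full_walk: "walk full_edges s es s' \<Longrightarrow> run (G_part s) (word es) (G_part s')"
proof (induction es arbitrary: s)
  case (Cons t es)
  then show ?case
    using full_edge_properties[of t] run_append_iff by auto
qed simp

lemma full_walk_states: "walk full_edges s es s' \<Longrightarrow> s \<in> full_states \<Longrightarrow> s' \<in> full_states"
  using full_edge_properties by (blast intro: walk_closed)

lemma core_walk:
  "(p, p') \<in> product_step\<^sup>* \<Longrightarrow> p \<in> core \<Longrightarrow> \<exists>es. walk full_edges (core_state p) es (core_state p')"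
proof (induction rule: rtrancl_induct)
  case base
  show ?case
    by (intro exI[of _ "[]"]) simp
next
  case (step q q')
  then obtain es where es: "walk full_edges (core_state p) es (core_state q)"
    by blast
  obtain x g x' g' where q: "q = (x, g)" "q' = (x', g')"
    by fastforce
  with step obtain e where e: "e \<in> AE" "fst e = x" "tgt e = x'" "run g (lab e) g'"
    unfolding product_step_def by blast
  have "q \<in> core"
    using core_closed step by blast
  with q e have "(core_state q, lab e, core_state q') \<in> full_edges"
    unfolding full_edges_def core_edges_def by blast
  with es show ?case
    using walk_snoc by fastforce
qed

lemma g0_out_edge: "\<exists>e\<in>AG. fst e = g0"
proof -
  have "x0 \<in> states E"
    using compatible_0 by (simp add: compatible_def)
  then obtain e where e: "e \<in> AE" "fst e = x0"
    using E_out_edge by blast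
  then have "lab e \<in> followers_G g0"
    using followers_E_edge[of e] compatible_0 by (auto simp: compatible_def)
  then obtain es g' where es: "walk AG g0 es g'" "word es = lab e"
    unfolding followers_G_def run_def by blast
  with e E_edge[of e] obtain t ts where "es = t # ts"
    by (cases es) auto
  with es show ?thesis
    by auto
qed

lemma G_cycle_to_g0:
  assumes "g \<in> states G"
  shows "\<exists>es. es \<noteq> [] \<and> walk AG g es g0"
proof -
  have g0: "g0 \<in> states G"
    using compatible_0 by (simp add: compatible_def)
  show ?thesis
  proof (cases "g = g0")
    case True
    obtain e where e: "e \<in> AG" "fst e = g0"
      using g0_out_edge by blast
    moreover obtain es where "walk AG (tgt e) es g0"
      using sc_G G_edge[of e] e g0 unfolding strongly_connected_walks by blast
    ultimately show ?thesis
      using True by (intro exI[of _ "e # es"]) simp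
  next
    case False
    obtain es where "walk AG g es g0"
      using sc_G assms g0 unfolding strongly_connected_walks by blast
    with False show ?thesis
      by (intro exI[of _ es]) (cases es, auto)
  qed
qed

lemma copy_walk_to_core:
  "walk AG g es g0 \<Longrightarrow> es \<noteq> [] \<Longrightarrow> \<exists>es'. walk full_edges (copy_state g) es' (core_state (x0, g0))"
proof (induction es arbitrary: g)
  case (Cons e es)
  then have e: "e \<in> AG" "fst e = g" "walk AG (tgt e) es g0"
    by auto
  let ?t = "(copy_state g, lab e, copy_target (tgt e))"
  have t: "?t \<in> full_edges"
    unfolding full_edges_def copy_edges_def using e by blast
  show ?case
  proof (cases "tgt e = g0")
    case True
    with t have "walk full_edges (copy_state g) [?t] (core_state (x0, g0))"
      by (simp add: copy_target_def)
    then show ?thesis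
      by blast
  next
    case False
    with e(3) have "es \<noteq> []"
      by auto
    with Cons.IH e(3) obtain es' where "walk full_edges (copy_state (tgt e)) es' (core_state (x0, g0))"
      by blast
    with t False have "walk full_edges (copy_state g) (?t # es') (core_state (x0, g0))"
      by (simp add: copy_target_def)
    then show ?thesis
      by blast
  qed
qed simp

lemma walk_back_to_core:
  assumes "s \<in> full_states"
  shows "\<exists>es. walk full_edges s es (core_state (x0, g0))"
  using assms unfolding full_states_def
proof
  assume "s \<in> core_state ` core"
  then show ?thesis
    using core_walk core_returns by blast
next
  assume "s \<in> copy_state ` states G"
  then show ?thesis
    using G_cycle_to_g0 copy_walk_to_core by blast
qed

lemma out_edge_along_run_copy:
  assumes "run g w g'" "w \<noteq> []"
  shows "\<exists>t\<in>full_edges. fst t = copy_state g \<and> prefix (lab t) w"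
proof -
  obtain a w1 where w: "w = a # w1"
    using assms(2) by (cases w) auto
  then obtain g1 where "run g [a] g1"
    using assms(1) run_append_iff[of g "[a]" w1 g'] by auto
  then obtain e where e: "e \<in> AG" "fst e = g" "lab e = [a]" "tgt e = g1"
    using run_single by blast
  then have "(copy_state (fst e), lab e, copy_target (tgt e)) \<in> full_edges"
    unfolding full_edges_def copy_edges_def by blast
  with e w show ?thesis
    by (intro bexI[of _ "(copy_state g, [a], copy_target g1)"]) simp_all
qed

lemma out_edge_along_run_core:
  assumes xg: "(x, g) \<in> core" and "run g w g'" "w \<noteq> []"
  shows "\<exists>t\<in>full_edges. fst t = core_state (x, g) \<and> (prefix w (lab t) \<or> prefix (lab t) w)"
proof (cases "\<exists>e\<in>AE. fst e = x \<and> (prefix w (lab e) \<or> prefix (lab e) w)")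
  case True
  then obtain e where e: "e \<in> AE" "fst e = x" "prefix w (lab e) \<or> prefix (lab e) w"
    by blast
  moreover obtain g1 where "run g (lab e) g1"
    using run_from_core[OF xg e(1,2)] by blast
  ultimately have "(core_state (x, g), lab e, core_state (tgt e, g1)) \<in> full_edges"
    unfolding full_edges_def core_edges_def using xg by blast
  with e(3) show ?thesis
    by (intro bexI[of _ "(core_state (x, g), lab e, core_state (tgt e, g1))"]) simp_all
next
  case False
  then have "\<forall>v\<in>out_labels x. \<not> prefix w v \<and> \<not> prefix v w"
    unfolding out_labels_def by blast
  with assms(3) obtain w1 w2 where w: "w = w1 @ w2" "escape (out_labels x) w1"
    using ex_escape_prefix by blast
  then obtain g1 where "run g w1 g1"
    using assms(2) run_append_iff by auto
  with w xg have "(core_state (x, g), w1, copy_state g1) \<in> full_edges"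
    unfolding full_edges_def escape_edges_def by blast
  with w show ?thesis
    by (intro bexI[of _ "(core_state (x, g), w1, copy_state g1)"]) simp_all
qed

lemma out_edge_along_run:
  assumes "s \<in> full_states" "run (G_part s) w g'" "w \<noteq> []"
  shows "\<exists>t\<in>full_edges. fst t = s \<and> (prefix w (lab t) \<or> prefix (lab t) w)"
  using assms out_edge_along_run_core out_edge_along_run_copy unfolding full_states_def by fastforce

lemma full_walk_covering_run:
  assumes "s \<in> full_states" "run (G_part s) w g'"
  shows "\<exists>es s'. walk full_edges s es s' \<and> prefix w (word es)"
  using assms
proof (induction "length w" arbitrary: s w rule: less_induct)
  case less
  show ?case
  proof (cases "w = []")
    case True
    then show ?thesis
      by (intro exI[of _ "[]"] exI[of _ s]) simp
  next
    case False
    then obtain t where t: "t \<in> full_edges" "fst t = s" and "prefix w (lab t) \<or> prefix (lab t) w"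
      using out_edge_along_run less.prems by blast
    then consider "prefix w (lab t)" | w2 where "w = lab t @ w2"
      by (auto simp: prefix_def)
    then show ?thesis
    proof cases
      case 1
      with t show ?thesis
        by (intro exI[of _ "[t]"] exI[of _ "tgt t"]) simp
    next
      case 2
      note props = full_edge_properties[OF t(1)]
      obtain g1 where "run (G_part s) (lab t) g1" "run g1 w2 g'"
        using less.prems(2) 2 run_append_iff by blast
      then have "run (G_part (tgt t)) w2 g'"
        using props t(2) run_unique by blast
      moreover have "length w2 < length w"
        using 2 props by simp
      ultimately obtain es s' where "walk full_edges (tgt t) es s'" "prefix w2 (word es)"
        using less.hyps props by blast
      with t 2 show ?thesis
        by (intro exI[of _ "t # es"] exI[of _ s']) simp
    qed
  qed
qed

definition reach :: "nat set" where
  "reach = {s. \<exists>es. walk full_edges (core_state (x0, g0)) es s}"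

definition H_edges :: "'a edge set" where
  "H_edges = {t \<in> full_edges. fst t \<in> reach}"

definition H :: "'a vlg" where
  "H = vlg_of reach H_edges"

lemma H_simps: "states H = reach" "edge_set H = H_edges" "distinct (edges H)"
proof -
  have "finite H_edges"
    using finite_full_edges by (simp add: H_edges_def)
  then show "states H = reach" "edge_set H = H_edges" "distinct (edges H)"
    unfolding H_def by (simp_all add: vlg_of_properties)
qed

lemma core_state_0_reach: "core_state (x0, g0) \<in> reach"
  unfolding reach_def by (intro CollectI exI[of _ "[]"]) simp

lemma reach_subset: "reach \<subseteq> full_states"
proof -
  have "core_state (x0, g0) \<in> full_states"
    using core_0 by (simp add: full_states_def)
  then show ?thesis
    unfolding reach_def using full_walk_states by blast
qed

lemma reach_closed: "t \<in> full_edges \<Longrightarrow> fst t \<in> reach \<Longrightarrow> tgt t \<in> reach"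
  unfolding reach_def using walk_snoc by blast

lemma core_reach: "core_state ` core \<subseteq> reach"
  unfolding reach_def core_def using core_walk core_0 by (auto simp: core_def)

lemma H_walk: "s \<in> reach \<Longrightarrow> walk full_edges s es s' \<Longrightarrow> walk H_edges s es s'"
  unfolding H_edges_def using reach_closed by (blast intro: walk_restrict)

lemma H_is_vlg: "is_vlg \<Sigma> H"
  unfolding is_vlg_edge_set H_simps
proof (intro conjI ballI)
  show "finite reach"
    using reach_subset finite_core finite_states(2) finite_subset by (fastforce simp: full_states_def)
  show "reach \<noteq> {}"
    using core_state_0_reach by blast
  fix t
  assume "t \<in> H_edges"
  then show "fst t \<in> reach" "tgt t \<in> reach" "lab t \<noteq> []" "set (lab t) \<subseteq> \<Sigma>"
    unfolding H_edges_def using reach_closed full_edge_properties by auto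
qed

lemma H_deterministic: "deterministic H"
proof -
  have "deterministic_edges H_edges"
    using deterministic_full_edges by (rule deterministic_edges_subset) (auto simp: H_edges_def)
  with H_simps(2,3) show ?thesis
    by (simp add: deterministic_iff)
qed

lemma H_max_edge_len: "max_edge_len_le H r"
  unfolding max_edge_len_le_edge_set H_simps H_edges_def using full_edge_properties by auto

lemma H_strongly_connected: "strongly_connected H"
  unfolding strongly_connected_walks H_simps
proof (intro ballI)
  fix u v
  assume u: "u \<in> reach" and v: "v \<in> reach"
  obtain es1 where "walk full_edges u es1 (core_state (x0, g0))"
    using walk_back_to_core reach_subset u by blast
  moreover obtain es2 where "walk full_edges (core_state (x0, g0)) es2 v"
    using v unfolding reach_def by blast
  ultimately have "walk full_edges u (es1 @ es2) v"
    by (auto simp: walk_append_iff)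
  then show "\<exists>es. walk H_edges u es v"
    using H_walk u by blast
qed

lemma H_constraint: "vlg_constraint H = S"
proof (intro set_eqI iffI)
  fix w
  assume "w \<in> vlg_constraint H"
  then obtain u es v x y where es: "walk H_edges u es v" "x @ w @ y = word es"
    unfolding vlg_constraint_walks H_simps by blast
  have "walk full_edges u es v"
    using es(1) by (rule walk_mono) (auto simp: H_edges_def)
  then have "run (G_part u) (x @ w @ y) (G_part v)"
    using run_along_full_walk es(2) by simp
  then show "w \<in> S"
    using run_append_iff run_in_S by metis
next
  fix w
  assume "w \<in> S"
  then obtain g g' where g: "g \<in> states G" "run g w g'"
    unfolding S_eq_followers_G followers_G_def by blast
  have "g0 \<in> states G"
    using compatible_0 by (simp add: compatible_def)
  then obtain zs where "walk AG g0 zs g"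
    using sc_G g(1) unfolding strongly_connected_walks by blast
  then have "run g0 (word zs @ w) g'"
    using g(2) run_append_iff unfolding run_def by blast
  moreover have "core_state (x0, g0) \<in> full_states"
    using core_0 by (simp add: full_states_def)
  ultimately obtain es s' where es: "walk full_edges (core_state (x0, g0)) es s'" "prefix (word zs @ w) (word es)"
    using full_walk_covering_run[of "core_state (x0, g0)" "word zs @ w" g'] by auto
  then obtain y where "word zs @ w @ y = word es"
    by (auto simp: prefix_def)
  with H_walk[OF core_state_0_reach es(1)] show "w \<in> vlg_constraint H"
    unfolding vlg_constraint_walks H_simps by blast
qed

definition core_edge :: "nat \<Rightarrow> 'a edge \<Rightarrow> 'a edge" where
  "core_edge g e = (core_state (fst e, g), lab e, core_state (tgt e, G_next g (lab e)))"

lemma inj_on_core_edge: "inj_on (core_edge g) {e \<in> AE. fst e = x}"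
proof
  fix e1 e2
  assume "e1 \<in> {e \<in> AE. fst e = x}" "e2 \<in> {e \<in> AE. fst e = x}" "core_edge g e1 = core_edge g e2"
  then have "e1 \<in> AE" "e2 \<in> AE" "fst e1 = fst e2" "prefix (lab e1) (lab e2)"
    by (simp_all add: core_edge_def)
  with det_AE show "e1 = e2"
    unfolding deterministic_edges_def by blast
qed

lemma core_out_edges:
  assumes xg: "(x, g) \<in> core"
  shows "{t \<in> H_edges. fst t = core_state (x, g) \<and> tgt t \<in> core_state ` core \<and> P (lab t)} =
         core_edge g ` {e \<in> AE. fst e = x \<and> P (lab e)}"
    (is "?H = _")
proof (intro equalityI subsetI)
  fix t
  assume "t \<in> core_edge g ` {e \<in> AE. fst e = x \<and> P (lab e)}"
  then obtain e where e: "e \<in> AE" "fst e = x" "P (lab e)" "t = core_edge g e"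
    by blast
  from run_from_core[OF xg e(1,2)] obtain g' where "run g (lab e) g'"
    by blast
  then have run: "run g (lab e) (G_next g (lab e))"
    using G_next by simp
  then have "(tgt e, G_next g (lab e)) \<in> core"
    using core_step[OF xg e(1,2)] by blast
  moreover have "t \<in> full_edges"
    unfolding e(4) core_edge_def full_edges_def core_edges_def using xg e(1,2) run by blast
  moreover have "core_state (x, g) \<in> reach"
    using core_reach xg by blast
  ultimately show "t \<in> ?H"
    using e by (simp add: H_edges_def core_edge_def)
next
  fix t
  assume t: "t \<in> ?H"
  then have "t \<in> full_edges"
    by (simp add: H_edges_def)
  then show "t \<in> core_edge g ` {e \<in> AE. fst e = x \<and> P (lab e)}"
  proof (cases rule: full_edges_cases)
    case (core x' g' e g'')
    with t have "x' = x" "g' = g"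
      by simp_all
    with core t have "t = core_edge g e" "e \<in> {e \<in> AE. fst e = x \<and> P (lab e)}"
      using G_next[of g "lab e" g''] by (simp_all add: core_edge_def)
    then show ?thesis
      by blast
  qed (use t in auto)
qed

lemma out_count_core:
  assumes "(x, g) \<in> core"
  shows "out_count \<Sigma>1 H_edges (core_state ` core) (core_state (x, g)) p = out_count \<Sigma>1 AE (states E) x p"
proof
  fix l
  let ?P = "\<lambda>w. length w = l \<and> even_word \<Sigma>1 w = p"
  have "{e \<in> AE. fst e = x \<and> tgt e \<in> states E \<and> ?P (lab e)} = {e \<in> AE. fst e = x \<and> ?P (lab e)}"
    using E_edge by blast
  moreover have "card (core_edge g ` {e \<in> AE. fst e = x \<and> ?P (lab e)}) = card {e \<in> AE. fst e = x \<and> ?P (lab e)}"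
    by (rule card_image[OF inj_on_subset[OF inj_on_core_edge[of g x]]]) blast
  ultimately show "out_count \<Sigma>1 H_edges (core_state ` core) (core_state (x, g)) p l = out_count \<Sigma>1 AE (states E) x p l"
    using core_out_edges[OF assms, of ?P] by (simp add: out_count_def)
qed

lemma H_principal: "principal_states \<Sigma>1 n0 n1 H (core_state ` core)"
  unfolding principal_states_iff
proof (intro conjI ballI)
  show "core_state ` core \<noteq> {}"
    using core_0 by blast
  show "core_state ` core \<subseteq> states H"
    using core_reach H_simps(1) by simp
  fix s
  assume "s \<in> core_state ` core"
  then obtain x g where s: "s = core_state (x, g)" and xg: "(x, g) \<in> core"
    by auto
  have "x \<in> states E"
    using compatible_core[OF xg] by (simp add: compatible_def)
  with VLE have "VLE_distribution n0 n1 (eta_dist \<Sigma>1 E (states E) x) (omega_dist \<Sigma>1 E (states E) x)"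
    by (simp add: is_VLE_iff)
  moreover have "eta_dist \<Sigma>1 H (core_state ` core) s = eta_dist \<Sigma>1 E (states E) x"
    "omega_dist \<Sigma>1 H (core_state ` core) s = omega_dist \<Sigma>1 E (states E) x"
    using det_E H_simps out_count_core[OF xg] s
    by (simp_all add: deterministic_iff eta_dist_out_count omega_dist_out_count)
  ultimately show "principal_distribution n0 n1 (eta_dist \<Sigma>1 H (core_state ` core) s) (omega_dist \<Sigma>1 H (core_state ` core) s)"
    using principal_if_VLE_distribution n0_pos by simp
qed

end

context VLE_and_presentation
begin

lemma ex_presentation_with_principal_states:
  "\<exists>H. is_vlg \<Sigma> H \<and> strongly_connected H \<and> deterministic H \<and> max_edge_len_le H r \<and>
       vlg_constraint H = S \<and> (\<exists>V'. principal_states \<Sigma>1 n0 n1 H V')"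
proof -
  obtain x0 g0 where "compatible x0 g0"
    "\<And>p. ((x0, g0), p) \<in> product_step\<^sup>* \<Longrightarrow> (p, (x0, g0)) \<in> product_step\<^sup>*"
    using ex_terminal_compatible by blast
  then interpret VLE_core \<Sigma> \<Sigma>1 S n0 n1 r E G x0 g0
    by unfold_locales
  show ?thesis
    using H_is_vlg H_strongly_connected H_deterministic H_max_edge_len H_constraint H_principal by blast
qed

end

theorem theorem5:
  fixes \<Sigma> \<Sigma>0 \<Sigma>1 :: "'a set" and S :: "'a list set" and n0 n1 r :: nat
  assumes "finite \<Sigma>"
    and "irreducible_constraint \<Sigma> S"
    and "is_partition2 \<Sigma> \<Sigma>0 \<Sigma>1"
    and "n0 > 0" and "n1 > 0" and "r > 0"
  shows "(\<exists>E. is_VLE \<Sigma> \<Sigma>1 S n0 n1 E \<and> deterministic E \<and> max_edge_len_le E r) \<longleftrightarrow>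
         (\<exists>H. is_vlg \<Sigma> H \<and> strongly_connected H \<and> deterministic H \<and> max_edge_len_le H r \<and>
              vlg_constraint H = S \<and> (\<exists>V'. principal_states \<Sigma>1 n0 n1 H V'))"
proof
  assume "\<exists>E. is_VLE \<Sigma> \<Sigma>1 S n0 n1 E \<and> deterministic E \<and> max_edge_len_le E r"
  then obtain E where "is_VLE \<Sigma> \<Sigma>1 S n0 n1 E" "deterministic E" "max_edge_len_le E r"
    by blast
  moreover obtain G where "is_vlg \<Sigma> G" "\<forall>i\<in>eids G. length (elab G i) = 1" "deterministic G"
    "strongly_connected G" "S = path_words G"
    using assms(2) unfolding irreducible_constraint_def by blast
  ultimately interpret VLE_and_presentation \<Sigma> \<Sigma>1 S n0 n1 r E G
    using assms(1,4,6) by unfold_locales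
  show "\<exists>H. is_vlg \<Sigma> H \<and> strongly_connected H \<and> deterministic H \<and> max_edge_len_le H r \<and>
            vlg_constraint H = S \<and> (\<exists>V'. principal_states \<Sigma>1 n0 n1 H V')"
    by (rule ex_presentation_with_principal_states)
next
  assume "\<exists>H. is_vlg \<Sigma> H \<and> strongly_connected H \<and> deterministic H \<and> max_edge_len_le H r \<and>
              vlg_constraint H = S \<and> (\<exists>V'. principal_states \<Sigma>1 n0 n1 H V')"
  then obtain H V' where "is_vlg \<Sigma> H" "deterministic H" "max_edge_len_le H r"
    "vlg_constraint H = S" "principal_states \<Sigma>1 n0 n1 H V'"
    by blast
  with VLE_of_principal_states[OF assms(4)] show "\<exists>E. is_VLE \<Sigma> \<Sigma>1 S n0 n1 E \<and> deterministic E \<and> max_edge_len_le E r"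
    by blast
qed

end
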